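(* Let $f,g:[a;b]\to\mathbb{R}$ be two regulated functions which have no common points of discontinuity. Let $\eta_0\ge\eta_1\ge\ldots$ and $\theta_0\ge\theta_1\ge\ldots$ be two sequences of non-negative numbers such that $\eta_k\downarrow0$ and $\theta_k\downarrow0$ as $k\to+\infty$. Define $\eta_{-1}:=\sup_{a\le t\le b}|f(t)-f(a)|$ and \[ S:=\sum_{k=0}^{+\infty}2^{k}\eta_{k-1}\cdot TV(g,[a;b],\theta_k)+\sum_{k=0}^{+\infty}2^{k}\theta_k\cdot TV(f,[a;b],\eta_k). \] If $S<+\infty$, then the Riemann–Stieltjes integral $\int_a^b f\,\mathrm{d}g$ exists and \[ \left|\int_a^b f\,\mathrm{d}g-f(a)\left[g(b)-g(a)\right]\right|\le S. \]
   Context: A function $h:[a;b]\to\mathbb{R}$ is regulated if the one-sided finite limits $\lim_{t\to a+}h(t)$, $\lim_{t\to b-}h(t)$ exist and, for every $x\in(a;b)$, both finite limits $\lim_{t\to x-}h(t)$ and $\lim_{t\to x+}h(t)$ exist. The total variation is $TV(h,[a;b],0)=\sup_n\sup_{a\le t_1<\dots<t_n\le b}\sum_{i=2}^{n}|h(t_i)-h(t_{i-1})|$. For $\delta\ge0$, the truncated variation is $TV(h,[a;b],\delta):=\inf\{TV(u,[a;b],0):\sup_{a\le t\le b}|h(t)-u(t)|\le\delta/2\}$; for regulated $h$ and $\delta>0$ it equals $\sup_n\sup_{a\le t_1<\dots<t_n\le b}\sum_{i=2}^{n}\max\{|h(t_i)-h(t_{i-1})|-\delta,0\}$. The Riemann–Stieltjes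 integral $\int_a^b f\,\mathrm{d}g$ exists if the sums $\sum_i f(\nu_i)[g(a_i)-g(a_{i-1})]$ over partitions $a=a_0<\dots<a_l=b$ with tags $\nu_i\in[a_{i-1};a_i]$ converge to a common limit as the mesh $\max_i(a_i-a_{i-1})\to0$, independently of the choice of tags. *)

theory Defs
  imports "HOL-Analysis.Analysis"
begin

definition regulated :: "(real \<Rightarrow> real) \<Rightarrow> real \<Rightarrow> real \<Rightarrow> bool" where
  "regulated h a b \<longleftrightarrow>
     (\<exists>L. (h \<longlongrightarrow> L) (at_right a)) \<and> (\<exists>L. (h \<longlongrightarrow> L) (at_left b)) \<and>
     (\<forall>x\<in>{a<..<b}. (\<exists>L. (h \<longlongrightarrow> L) (at_left x)) \<and> (\<exists>L. (h \<longlongrightarrow> L) (at_right x)))"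

definition total_variation :: "(real \<Rightarrow> real) \<Rightarrow> real \<Rightarrow> real \<Rightarrow> ereal" where
  "total_variation h a b =
     Sup {ereal (\<Sum>i<n - 1. \<bar>h (t (Suc i)) - h (t i)\<bar>) | n t.
            (\<forall>i<n. a \<le> t i \<and> t i \<le> b) \<and> (\<forall>i. Suc i < n \<longrightarrow> t i < t (Suc i))}"

definition truncated_variation :: "(real \<Rightarrow> real) \<Rightarrow> real \<Rightarrow> real \<Rightarrow> real \<Rightarrow> ereal" where
  "truncated_variation h a b \<delta> =
     (INF u \<in> {u. \<forall>t\<in>{a..b}. \<bar>h t - u t\<bar> \<le> \<delta> / 2}. total_variation u a b)"

definition RS_has_integral :: "(real \<Rightarrow> real) \<Rightarrow> (real \<Rightarrow> real) \<Rightarrow> real \<Rightarrow> real \<Rightarrow> real \<Rightarrow> bool" where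
  "RS_has_integral f g a b I \<longleftrightarrow>
     (\<forall>\<epsilon>>0. \<exists>\<delta>>0. \<forall>(l::nat) (x::nat \<Rightarrow> real) (\<nu>::nat \<Rightarrow> real).
        x 0 = a \<and> x l = b \<and> (\<forall>i<l. x i < x (Suc i) \<and> x (Suc i) - x i < \<delta>) \<and>
        (\<forall>i<l. x i \<le> \<nu> i \<and> \<nu> i \<le> x (Suc i)) \<longrightarrow>
        \<bar>(\<Sum>i<l. f (\<nu> i) * (g (x (Suc i)) - g (x i))) - I\<bar> < \<epsilon>)"

end

theory Submission
  imports Defs
begin

definition chain_variation :: "(real \<Rightarrow> real) \<Rightarrow> (nat \<Rightarrow> real) \<Rightarrow> nat \<Rightarrow> real" where
  "chain_variation h x l = (\<Sum>i<l. \<bar>h (x (Suc i)) - h (x i)\<bar>)"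

lemma chain_variation_0 [simp]: "chain_variation h x 0 = 0"
  by (simp add: chain_variation_def)

lemma chain_variation_Suc [simp]:
  "chain_variation h x (Suc l) = chain_variation h x l + \<bar>h (x (Suc l)) - h (x l)\<bar>"
  by (simp add: chain_variation_def)

lemma chain_variation_nonneg: "0 \<le> chain_variation h x l"
  by (simp add: chain_variation_def sum_nonneg)

lemma chain_variation_cong:
  "(\<And>i. i \<le> l \<Longrightarrow> h (x i) = h' (y i)) \<Longrightarrow> chain_variation h x l = chain_variation h' y l"
  unfolding chain_variation_def by (intro sum.cong) auto

lemma chain_variation_append:
  fixes x y :: "nat \<Rightarrow> real" and l :: nat
  defines "w \<equiv> \<lambda>i. if i \<le> l then x i else y (i - Suc l)"
  shows "chain_variation h w (l + Suc m) =
    chain_variation h x l + \<bar>h (y 0) - h (x l)\<bar> + chain_variation h y m"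
proof (induction m)
  case 0
  have "chain_variation h w l = chain_variation h x l"
    by (rule chain_variation_cong) (simp add: w_def)
  then show ?case by (simp add: w_def)
next
  case (Suc m)
  have "w (l + Suc m) = y m" "w (Suc (l + Suc m)) = y (Suc m)"
    by (simp_all add: w_def)
  with Suc.IH show ?case by simp
qed

lemma chain_mono:
  fixes x :: "nat \<Rightarrow> real"
  assumes "\<forall>i<l. x i \<le> x (Suc i)" "i \<le> j" "j \<le> l"
  shows "x i \<le> x j"
proof -
  have "x (min n l) \<le> x (min (Suc n) l)" for n
    using assms(1) by (cases "Suc n \<le> l") (auto simp: min_def not_less_eq_eq dest: le_antisym)
  then have "x (min i l) \<le> x (min j l)"
    by (rule lift_Suc_mono_le[of "\<lambda>i. x (min i l)"]) (use assms in simp)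
  with assms show ?thesis by (simp add: min_def)
qed

lemma exists_strict_subchain:
  assumes "\<forall>i<l. x i \<le> x (Suc i)"
  shows "\<exists>m y. y ` {..m} \<subseteq> x ` {..l} \<and> (\<forall>i<m. y i < y (Suc i)) \<and> y m = x l \<and>
    chain_variation h y m = chain_variation h x l"
  using assms
proof (induction l)
  case 0
  show ?case by (intro exI[of _ 0] exI[of _ x]) simp
next
  case (Suc l)
  then obtain m y where y: "y ` {..m} \<subseteq> x ` {..l}" "\<forall>i<m. y i < y (Suc i)" "y m = x l"
    "chain_variation h y m = chain_variation h x l"
    by auto
  have range: "x ` {..l} \<subseteq> x ` {..Suc l}" by auto
  show ?case
  proof (cases "x (Suc l) = x l")
    case True
    with y range show ?thesis by (intro exI[of _ m] exI[of _ y]) auto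
  next
    case False
    with Suc.prems have lt: "y m < x (Suc l)" using y(3) by (simp add: order_less_le)
    define y' where "y' = y(Suc m := x (Suc l))"
    have ends: "y' m = x l" "y' (Suc m) = x (Suc l)"
      using y(3) by (simp_all add: y'_def)
    have "chain_variation h y' m = chain_variation h y m"
      by (rule chain_variation_cong) (simp add: y'_def)
    moreover have "\<forall>i<Suc m. y' i < y' (Suc i)"
      using y(2) lt by (auto simp: y'_def less_Suc_eq)
    moreover have "y' ` {..Suc m} \<subseteq> x ` {..Suc l}"
      using y(1) range by (auto simp: y'_def atMost_Suc)
    ultimately show ?thesis
      using y(4) ends by (intro exI[of _ "Suc m"] exI[of _ y']) simp
  qed
qed

lemma chain_variation_le_total_variation_strict:
  assumes "\<forall>i\<le>l. c \<le> x i \<and> x i \<le> d" "\<forall>i<l. x i < x (Suc i)"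
  shows "ereal (chain_variation h x l) \<le> total_variation h c d"
  unfolding total_variation_def chain_variation_def
  by (rule Sup_upper, rule CollectI, rule exI[of _ "Suc l"], rule exI[of _ x]) (use assms in auto)

lemma chain_variation_le_total_variation:
  assumes "\<forall>i\<le>l. c \<le> x i \<and> x i \<le> d" "\<forall>i<l. x i \<le> x (Suc i)"
  shows "ereal (chain_variation h x l) \<le> total_variation h c d"
proof -
  obtain m y where y: "y ` {..m} \<subseteq> x ` {..l}" "\<forall>i<m. y i < y (Suc i)"
    "chain_variation h y m = chain_variation h x l"
    using exists_strict_subchain[OF assms(2)] by blast
  have "\<forall>i\<le>m. c \<le> y i \<and> y i \<le> d"
    using y(1) assms(1) by fastforce
  from chain_variation_le_total_variation_strict[where h=h, OF this y(2)] y(3) show ?thesis by simp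
qed

lemma total_variation_least:
  assumes "0 \<le> B"
    and "\<And>l x. \<forall>i\<le>l. c \<le> x i \<and> x i \<le> d \<Longrightarrow> \<forall>i<l. x i < x (Suc i) \<Longrightarrow>
      ereal (chain_variation h x l) \<le> B"
  shows "total_variation h c d \<le> B"
  unfolding total_variation_def
proof (rule Sup_least, clarify)
  fix n and t :: "nat \<Rightarrow> real"
  assume t: "\<forall>i<n. c \<le> t i \<and> t i \<le> d" "\<forall>i. Suc i < n \<longrightarrow> t i < t (Suc i)"
  show "ereal (\<Sum>i<n - 1. \<bar>h (t (Suc i)) - h (t i)\<bar>) \<le> B"
  proof (cases n)
    case (Suc l)
    with t assms(2)[of l t] show ?thesis by (simp add: chain_variation_def)
  qed (use assms(1) in \<open>simp add: zero_ereal_def[symmetric]\<close>)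
qed

lemma total_variation_nonneg: "0 \<le> total_variation h c d"
  unfolding total_variation_def
  by (rule Sup_upper2[of 0], rule CollectI, rule exI[of _ 0]) auto

lemma total_variation_mono_dominated:
  assumes "\<And>s t. s \<in> {c..d} \<Longrightarrow> t \<in> {c..d} \<Longrightarrow> \<bar>h' s - h' t\<bar> \<le> \<bar>h s - h t\<bar>"
  shows "total_variation h' c d \<le> total_variation h c d"
proof (rule total_variation_least[OF total_variation_nonneg])
  fix l x
  assume x: "\<forall>i\<le>l. c \<le> x i \<and> x i \<le> d" "\<forall>i<l. x i < x (Suc i)"
  have "chain_variation h' x l \<le> chain_variation h x l"
    unfolding chain_variation_def by (intro sum_mono assms) (use x in auto)
  also have "ereal (chain_variation h x l) \<le> total_variation h c d"
    by (rule chain_variation_le_total_variation_strict[OF x])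
  finally show "ereal (chain_variation h' x l) \<le> total_variation h c d" by simp
qed

lemma total_variation_cong:
  "(\<And>t. t \<in> {c..d} \<Longrightarrow> h' t = h t) \<Longrightarrow> total_variation h' c d = total_variation h c d"
  by (intro antisym total_variation_mono_dominated) auto

lemma total_variation_const: "total_variation (\<lambda>_. k) c d = 0"
  by (intro antisym total_variation_nonneg total_variation_least) (auto simp: chain_variation_def)

lemma total_variation_subinterval:
  assumes "c \<le> c'" "d' \<le> d"
  shows "total_variation h c' d' \<le> total_variation h c d"
  by (rule total_variation_least[OF total_variation_nonneg],
      rule chain_variation_le_total_variation_strict) (use assms in \<open>auto intro: order_trans\<close>)

lemma ereal_Sup_add_Sup_le:
  fixes A B :: "ereal set"
  assumes "A \<noteq> {}" "B \<noteq> {}" "\<forall>a\<in>A. 0 \<le> a" "\<forall>b\<in>B. 0 \<le> b"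
    and "\<And>a b. a \<in> A \<Longrightarrow> b \<in> B \<Longrightarrow> a + b \<le> X"
  shows "Sup A + Sup B \<le> X"
proof -
  obtain b0 where "b0 \<in> B" using assms(2) by blast
  then have "0 \<le> Sup B" using assms(4) by (meson Sup_upper order_trans)
  then have "Sup B \<noteq> - \<infinity>" by auto
  then have "Sup A + Sup B = (SUP a\<in>A. a + Sup B)"
    using SUP_ereal_add_left[OF assms(1), of "Sup B" id] by simp
  also have "\<dots> \<le> X"
  proof (rule SUP_least)
    fix a assume a: "a \<in> A"
    then have "a \<noteq> - \<infinity>" using assms(3) by auto
    then have "a + Sup B = (SUP b\<in>B. a + b)"
      using SUP_ereal_add_right[OF assms(2), of a id] by simp
    also have "\<dots> \<le> X" using a assms(5) by (auto intro: SUP_least)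
    finally show "a + Sup B \<le> X" .
  qed
  finally show ?thesis .
qed

lemma chain_variation_add_le_total_variation:
  assumes "c \<le> d" "d \<le> e"
    and t: "\<forall>i\<le>l. c \<le> t i \<and> t i \<le> d" "\<forall>i<l. t i \<le> t (Suc i)"
    and t': "\<forall>i\<le>m. d \<le> t' i \<and> t' i \<le> e" "\<forall>i<m. t' i \<le> t' (Suc i)"
  shows "ereal (chain_variation h t l + chain_variation h t' m) \<le> total_variation h c e"
proof -
  define w where "w i = (if i \<le> l then t i else t' (i - Suc l))" for i
  have "\<forall>i\<le>l + Suc m. c \<le> w i \<and> w i \<le> e"
  proof (intro allI impI)
    fix i assume i: "i \<le> l + Suc m"
    show "c \<le> w i \<and> w i \<le> e"
    proof (cases "i \<le> l")
      case True
      with t(1) assms(2) show ?thesis by (auto simp: w_def)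
    next
      case False
      with t'(1) i assms(1) have "d \<le> t' (i - Suc l) \<and> t' (i - Suc l) \<le> e" by simp
      with False assms(1) show ?thesis by (simp add: w_def)
    qed
  qed
  moreover have "\<forall>i<l + Suc m. w i \<le> w (Suc i)"
  proof (intro allI impI)
    fix i assume i: "i < l + Suc m"
    consider "i < l" | "i = l" | "l < i" by linarith
    then show "w i \<le> w (Suc i)"
    proof cases
      case 2
      then have "t i \<le> d" "d \<le> t' 0" using t t' by auto
      with 2 show ?thesis by (simp add: w_def)
    next
      case 3
      then have "i - Suc l < m" "Suc i - Suc l = Suc (i - Suc l)" using i by auto
      with 3 t'(2) show ?thesis by (simp add: w_def)
    qed (use t in \<open>simp add: w_def\<close>)
  qed
  ultimately have "ereal (chain_variation h w (l + Suc m)) \<le> total_variation h c e"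
    by (rule chain_variation_le_total_variation)
  moreover have "chain_variation h t l + chain_variation h t' m \<le> chain_variation h w (l + Suc m)"
    unfolding w_def chain_variation_append by simp
  ultimately show ?thesis by (meson ereal_less_eq(3) order_trans)
qed

lemma total_variation_add_le:
  assumes "c \<le> d" "d \<le> e"
  shows "total_variation h c d + total_variation h d e \<le> total_variation h c e"
  unfolding total_variation_def[of h c d] total_variation_def[of h d e]
proof (rule ereal_Sup_add_Sup_le)
  let ?P = "\<lambda>c d n t. (\<forall>i<n. c \<le> t i \<and> t i \<le> d) \<and> (\<forall>i. Suc i < (n::nat) \<longrightarrow> t i < t (Suc i))"
  let ?V = "\<lambda>n t. ereal (\<Sum>i<n - 1. \<bar>h (t (Suc i)) - h (t i)\<bar>)"
  show "{?V n t |n t. ?P c d n t} \<noteq> {}" "{?V n t |n t. ?P d e n t} \<noteq> {}"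
    by blast+
  show "\<forall>a\<in>{?V n t |n t. ?P c d n t}. 0 \<le> a" "\<forall>a\<in>{?V n t |n t. ?P d e n t}. 0 \<le> a"
    by (auto intro!: sum_nonneg)
  fix a b
  assume "a \<in> {?V n t |n t. ?P c d n t}" "b \<in> {?V n t |n t. ?P d e n t}"
  then obtain n t n' t' where ab: "a = ?V n t" "b = ?V n' t'" and t: "?P c d n t" and t': "?P d e n' t'"
    by blast
  show "a + b \<le> total_variation h c e"
  proof (cases "n = 0 \<or> n' = 0")
    case True
    have "a \<le> total_variation h c d" "b \<le> total_variation h d e"
      unfolding ab total_variation_def using t t' by (blast intro: Sup_upper)+
    with True ab assms show ?thesis
      using total_variation_subinterval[of c c d e h] total_variation_subinterval[of c d e e h]
      by (auto simp: zero_ereal_def[symmetric])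
  next
    case False
    then obtain l m where lm: "n = Suc l" "n' = Suc m" by (metis not0_implies_Suc)
    with t t' assms have "ereal (chain_variation h t l + chain_variation h t' m) \<le> total_variation h c e"
      by (intro chain_variation_add_le_total_variation) (auto simp: less_imp_le)
    then show ?thesis unfolding ab lm by (simp add: chain_variation_def)
  qed
qed

lemma total_variation_partition_le:
  assumes "\<forall>i<l. x i \<le> x (Suc i)"
  shows "(\<Sum>i<l. total_variation h (x i) (x (Suc i))) \<le> total_variation h (x 0) (x l)"
  using assms
proof (induction l)
  case (Suc l)
  have "x 0 \<le> x l" using chain_mono[OF Suc.prems, of 0 l] by simp
  then have "(\<Sum>i<Suc l. total_variation h (x i) (x (Suc i)))
      \<le> total_variation h (x 0) (x l) + total_variation h (x l) (x (Suc l))"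
    using Suc by (simp add: add_right_mono)
  also have "\<dots> \<le> total_variation h (x 0) (x (Suc l))"
    using \<open>x 0 \<le> x l\<close> Suc.prems by (intro total_variation_add_le) auto
  finally show ?case .
qed (simp add: total_variation_nonneg)

lemma truncated_variation_le_total_variation:
  "\<forall>t\<in>{c..d}. \<bar>h t - u t\<bar> \<le> \<delta> / 2 \<Longrightarrow> truncated_variation h c d \<delta> \<le> total_variation u c d"
  unfolding truncated_variation_def by (rule INF_lower) simp

lemma truncated_variation_nonneg: "0 \<le> truncated_variation h c d \<delta>"
  unfolding truncated_variation_def by (rule INF_greatest) (rule total_variation_nonneg)

lemma truncated_variation_approx:
  assumes "0 \<le> \<delta>" "0 < e"
  shows "\<exists>v. (\<forall>t\<in>{c..d}. \<bar>h t - v t\<bar> \<le> \<delta> / 2) \<and>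
    total_variation v c d \<le> truncated_variation h c d \<delta> + ereal e"
proof (cases "truncated_variation h c d \<delta> = \<infinity>")
  case True
  with assms show ?thesis by (intro exI[of _ h]) simp
next
  case False
  then have "truncated_variation h c d \<delta> < truncated_variation h c d \<delta> + ereal e"
    using assms(2) truncated_variation_nonneg[of h c d \<delta>]
    by (cases "truncated_variation h c d \<delta>") auto
  then show ?thesis
    unfolding truncated_variation_def[of h c d \<delta>] INF_less_iff by (auto intro: less_imp_le)
qed

lemma truncated_variation_zero: "truncated_variation h c d 0 = total_variation h c d"
proof (rule antisym)
  show "truncated_variation h c d 0 \<le> total_variation h c d"
    by (rule truncated_variation_le_total_variation) simp
  show "total_variation h c d \<le> truncated_variation h c d 0"
    unfolding truncated_variation_def
    by (rule INF_greatest) (auto intro: total_variation_cong[THEN eq_refl])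
qed

lemma truncated_variation_antimono:
  "\<delta> \<le> \<delta>' \<Longrightarrow> truncated_variation h c d \<delta>' \<le> truncated_variation h c d \<delta>"
  unfolding truncated_variation_def by (rule INF_superset_mono) (auto intro: order_trans)

lemma truncated_variation_subinterval:
  assumes "c \<le> c'" "d' \<le> d"
  shows "truncated_variation h c' d' \<delta> \<le> truncated_variation h c d \<delta>"
  unfolding truncated_variation_def[of h c d]
proof (rule INF_greatest)
  fix u assume "u \<in> {u. \<forall>t\<in>{c..d}. \<bar>h t - u t\<bar> \<le> \<delta> / 2}"
  with assms have "truncated_variation h c' d' \<delta> \<le> total_variation u c' d'"
    by (intro truncated_variation_le_total_variation) auto
  also have "\<dots> \<le> total_variation u c d" by (rule total_variation_subinterval[OF assms])
  finally show "truncated_variation h c' d' \<delta> \<le> total_variation u c d" .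
qed

lemma truncated_variation_partition_le:
  assumes "\<forall>i<l. x i \<le> x (Suc i)"
  shows "(\<Sum>i<l. truncated_variation h (x i) (x (Suc i)) \<delta>) \<le> truncated_variation h (x 0) (x l) \<delta>"
  unfolding truncated_variation_def[of h "x 0" "x l"]
proof (rule INF_greatest)
  fix u assume u: "u \<in> {u. \<forall>t\<in>{x 0..x l}. \<bar>h t - u t\<bar> \<le> \<delta> / 2}"
  have "(\<Sum>i<l. truncated_variation h (x i) (x (Suc i)) \<delta>) \<le> (\<Sum>i<l. total_variation u (x i) (x (Suc i)))"
  proof (intro sum_mono truncated_variation_le_total_variation ballI)
    fix i t assume "i \<in> {..<l}" "t \<in> {x i..x (Suc i)}"
    moreover have "x 0 \<le> x i" "x (Suc i) \<le> x l"
      using calculation chain_mono[OF assms] by auto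
    ultimately show "\<bar>h t - u t\<bar> \<le> \<delta> / 2" using u by auto
  qed
  also have "\<dots> \<le> total_variation u (x 0) (x l)" by (rule total_variation_partition_le[OF assms])
  finally show "(\<Sum>i<l. truncated_variation h (x i) (x (Suc i)) \<delta>) \<le> total_variation u (x 0) (x l)" .
qed

lemma truncated_variation_eq_0_if_near_const:
  assumes "\<forall>t\<in>{c..d}. \<bar>h t - k\<bar> \<le> \<delta> / 2"
  shows "truncated_variation h c d \<delta> = 0"
  using truncated_variation_le_total_variation[of c d h "\<lambda>_. k"] assms
  by (intro antisym truncated_variation_nonneg) (simp add: total_variation_const)

definition tagged_partition :: "real \<Rightarrow> real \<Rightarrow> nat \<Rightarrow> (nat \<Rightarrow> real) \<Rightarrow> (nat \<Rightarrow> real) \<Rightarrow> bool" where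
  "tagged_partition c d l x \<nu> \<longleftrightarrow>
     x 0 = c \<and> x l = d \<and> (\<forall>i<l. x i < x (Suc i)) \<and> (\<forall>i<l. x i \<le> \<nu> i \<and> \<nu> i \<le> x (Suc i))"

definition RS_sum :: "(real \<Rightarrow> real) \<Rightarrow> (real \<Rightarrow> real) \<Rightarrow> nat \<Rightarrow> (nat \<Rightarrow> real) \<Rightarrow> (nat \<Rightarrow> real) \<Rightarrow> real" where
  "RS_sum f g l x \<nu> = (\<Sum>i<l. f (\<nu> i) * (g (x (Suc i)) - g (x i)))"

definition decreasing_to_zero :: "(nat \<Rightarrow> real) \<Rightarrow> bool" where
  "decreasing_to_zero \<eta> \<longleftrightarrow> (\<forall>k. 0 \<le> \<eta> k) \<and> antimono \<eta> \<and> \<eta> \<longlonglongrightarrow> 0"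

text \<open>The quantity \<open>S\<close> of the theorem, for the interval \<open>[c;d]\<close> and with \<open>M\<close> in the role of
  \<open>\<eta>\<^sub>-\<^sub>1\<close>.\<close>
definition truncated_variation_series ::
  "(real \<Rightarrow> real) \<Rightarrow> (real \<Rightarrow> real) \<Rightarrow> real \<Rightarrow> (nat \<Rightarrow> real) \<Rightarrow> (nat \<Rightarrow> real) \<Rightarrow> real \<Rightarrow> real \<Rightarrow> ereal"
  where
  "truncated_variation_series f g M \<eta> \<theta> c d =
     (\<Sum>k. ereal (2 ^ k * case_nat M \<eta> k) * truncated_variation g c d (\<theta> k)) +
     (\<Sum>k. ereal (2 ^ k * \<theta> k) * truncated_variation f c d (\<eta> k))"

lemma decreasing_to_zeroD:
  assumes "decreasing_to_zero \<eta>"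
  shows "0 \<le> \<eta> k" "j \<le> k \<Longrightarrow> \<eta> k \<le> \<eta> j" "\<eta> \<longlonglongrightarrow> 0"
  using assms by (auto simp: decreasing_to_zero_def antimonoD)

lemma decreasing_to_zero_shift:
  "decreasing_to_zero \<eta> \<Longrightarrow> decreasing_to_zero (\<lambda>k. \<eta> (k + N))"
  unfolding decreasing_to_zero_def antimono_def monotone_on_def
  by (auto intro: LIMSEQ_ignore_initial_segment)

lemma tagged_partition_mono: "tagged_partition c d l x \<nu> \<Longrightarrow> \<forall>i<l. x i \<le> x (Suc i)"
  by (simp add: tagged_partition_def less_imp_le)

lemma tagged_partition_points:
  assumes "tagged_partition c d l x \<nu>" "i \<le> l"
  shows "c \<le> x i" "x i \<le> d"
  using chain_mono[OF tagged_partition_mono[OF assms(1)], of 0 i]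
    chain_mono[OF tagged_partition_mono[OF assms(1)], of i l] assms
  by (auto simp: tagged_partition_def)

lemma tagged_partition_tags:
  assumes "tagged_partition c d l x \<nu>" "i < l"
  shows "c \<le> \<nu> i" "\<nu> i \<le> d"
  using tagged_partition_points[OF assms(1), of i] tagged_partition_points[OF assms(1), of "Suc i"] assms
  by (auto simp: tagged_partition_def intro: order_trans)

lemma tagged_partition_le: "tagged_partition c d l x \<nu> \<Longrightarrow> c \<le> d"
  using tagged_partition_points[of c d l x \<nu> 0] by simp

lemma chain_variation_le_total_variation_partition:
  "tagged_partition c d l x \<nu> \<Longrightarrow> ereal (chain_variation h x l) \<le> total_variation h c d"
  by (intro chain_variation_le_total_variation)
    (auto simp: tagged_partition_points tagged_partition_mono)

lemma chain_variation_tags_le_total_variation: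
  assumes "tagged_partition c d l x \<nu>"
  shows "ereal (chain_variation h (case_nat c \<nu>) l) \<le> total_variation h c d"
proof (rule chain_variation_le_total_variation)
  show "\<forall>i\<le>l. c \<le> case_nat c \<nu> i \<and> case_nat c \<nu> i \<le> d"
    using tagged_partition_tags[OF assms] tagged_partition_le[OF assms]
    by (auto split: nat.split)
  show "\<forall>i<l. case_nat c \<nu> i \<le> case_nat c \<nu> (Suc i)"
  proof (intro allI impI)
    fix i assume i: "i < l"
    show "case_nat c \<nu> i \<le> case_nat c \<nu> (Suc i)"
    proof (cases i)
      case (Suc j)
      then have "\<nu> j \<le> x (Suc j)" "x (Suc j) \<le> \<nu> (Suc j)" using assms i by (auto simp: tagged_partition_def)
      with Suc show ?thesis by simp
    qed (use assms i in \<open>auto simp: tagged_partition_def\<close>)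
  qed
qed

lemma RS_sum_const_left: "RS_sum (\<lambda>_. k) g l x \<nu> = k * (g (x l) - g (x 0))"
  unfolding RS_sum_def sum_distrib_left[symmetric]
  using sum_lessThan_telescope[of "\<lambda>i. g (x i)" l] by simp

lemma RS_sum_diff_left: "RS_sum (\<lambda>t. f t - f' t) g l x \<nu> = RS_sum f g l x \<nu> - RS_sum f' g l x \<nu>"
  unfolding RS_sum_def by (simp add: sum_subtractf left_diff_distrib)

lemma RS_sum_diff_right: "RS_sum f (\<lambda>t. g t - g' t) l x \<nu> = RS_sum f g l x \<nu> - RS_sum f g' l x \<nu>"
  unfolding RS_sum_def by (simp add: sum_subtractf[symmetric] algebra_simps)

lemma abs_RS_sum_le:
  assumes "\<forall>i<l. \<bar>f (\<nu> i)\<bar> \<le> M"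
  shows "\<bar>RS_sum f g l x \<nu>\<bar> \<le> M * chain_variation g x l"
proof -
  have "\<bar>RS_sum f g l x \<nu>\<bar> \<le> (\<Sum>i<l. \<bar>f (\<nu> i)\<bar> * \<bar>g (x (Suc i)) - g (x i)\<bar>)"
    unfolding RS_sum_def abs_mult[symmetric] by (rule sum_abs)
  also have "\<dots> \<le> (\<Sum>i<l. M * \<bar>g (x (Suc i)) - g (x i)\<bar>)"
    using assms by (intro sum_mono mult_right_mono) auto
  finally show ?thesis by (simp add: chain_variation_def sum_distrib_left)
qed

text \<open>Summation by parts along the chain \<open>x 0, \<nu> 0, \<nu> 1, \<dots>\<close> of the tags.\<close>
lemma RS_sum_by_parts:
  "RS_sum h w l x \<nu> = h (x 0) * (w (x l) - w (x 0)) +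
    (\<Sum>i<l. (w (x l) - w (x i)) * (h (\<nu> i) - h (case_nat (x 0) \<nu> i)))"
proof (induction l)
  case (Suc l)
  let ?d = "\<lambda>i. h (\<nu> i) - h (case_nat (x 0) \<nu> i)"
  have tel: "(\<Sum>i<Suc l. ?d i) = h (\<nu> l) - h (x 0)"
    using sum_lessThan_telescope[of "\<lambda>j. h (case_nat (x 0) \<nu> j)" "Suc l"] by simp
  have "(\<Sum>i<Suc l. (w (x (Suc l)) - w (x i)) * ?d i) =
      (\<Sum>i<Suc l. (w (x (Suc l)) - w (x l)) * ?d i + (w (x l) - w (x i)) * ?d i)"
    by (rule sum.cong) (auto simp: algebra_simps)
  also have "\<dots> = (w (x (Suc l)) - w (x l)) * (\<Sum>i<Suc l. ?d i) + (\<Sum>i<l. (w (x l) - w (x i)) * ?d i)"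
    by (simp add: sum.distrib sum_distrib_left distrib_left)
  finally have *: "(\<Sum>i<Suc l. (w (x (Suc l)) - w (x i)) * ?d i) =
      (w (x (Suc l)) - w (x l)) * (h (\<nu> l) - h (x 0)) + (\<Sum>i<l. (w (x l) - w (x i)) * ?d i)"
    unfolding tel .
  have "RS_sum h w (Suc l) x \<nu> = RS_sum h w l x \<nu> + h (\<nu> l) * (w (x (Suc l)) - w (x l))"
    by (simp add: RS_sum_def)
  then show ?case unfolding Suc.IH * by (simp add: algebra_simps)
qed (simp add: RS_sum_def)

lemma abs_RS_sum_by_parts_le:
  assumes P: "tagged_partition c d l x \<nu>" and "h c = 0"
    and osc: "\<forall>s\<in>{c..d}. \<forall>t\<in>{c..d}. \<bar>w s - w t\<bar> \<le> B"
  shows "\<bar>RS_sum h w l x \<nu>\<bar> \<le> B * chain_variation h (case_nat c \<nu>) l"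
proof -
  have x0: "x 0 = c" using P by (simp add: tagged_partition_def)
  have "\<bar>RS_sum h w l x \<nu>\<bar> \<le> (\<Sum>i<l. \<bar>w (x l) - w (x i)\<bar> * \<bar>h (\<nu> i) - h (case_nat c \<nu> i)\<bar>)"
    unfolding RS_sum_by_parts x0 \<open>h c = 0\<close> abs_mult[symmetric] by (simp add: sum_abs)
  also have "\<dots> \<le> (\<Sum>i<l. B * \<bar>h (\<nu> i) - h (case_nat c \<nu> i)\<bar>)"
    using osc tagged_partition_points[OF P] by (intro sum_mono mult_right_mono) auto
  finally show ?thesis by (simp add: chain_variation_def sum_distrib_left)
qed

text \<open>The telescoping expansion of \<open>RS_sum (F n) (G n)\<close> over the levels \<open>k < n\<close>: the
  increments of the integrand are paired with the integrator as is, while the increments of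
  the integrator are summed by parts.\<close>
lemma abs_RS_sum_telescoping_le:
  fixes F G :: "nat \<Rightarrow> real \<Rightarrow> real"
  assumes P: "tagged_partition c d l x \<nu>"
    and F0: "\<forall>t\<in>{c..d}. \<bar>F 0 t\<bar> \<le> M" and Fc: "\<forall>k. F k c = 0"
    and F_step: "\<forall>k. \<forall>t\<in>{c..d}. \<bar>F (Suc k) t - F k t\<bar> \<le> \<alpha> k"
    and G_step: "\<forall>k. \<forall>s\<in>{c..d}. \<forall>t\<in>{c..d}. \<bar>(G (Suc k) s - G k s) - (G (Suc k) t - G k t)\<bar> \<le> \<beta> k"
  shows "\<bar>RS_sum (F n) (G n) l x \<nu>\<bar> \<le> M * chain_variation (G 0) x l +
    (\<Sum>k<n. \<alpha> k * chain_variation (G (Suc k)) x l + \<beta> k * chain_variation (F k) (case_nat c \<nu>) l)"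
proof (induction n)
  case 0
  show ?case using F0 tagged_partition_tags[OF P] by (simp add: abs_RS_sum_le)
next
  case (Suc k)
  have "RS_sum (F (Suc k)) (G (Suc k)) l x \<nu> = RS_sum (F k) (G k) l x \<nu> +
      RS_sum (\<lambda>t. F (Suc k) t - F k t) (G (Suc k)) l x \<nu> + RS_sum (F k) (\<lambda>t. G (Suc k) t - G k t) l x \<nu>"
    by (simp add: RS_sum_diff_left RS_sum_diff_right)
  moreover have "\<bar>RS_sum (\<lambda>t. F (Suc k) t - F k t) (G (Suc k)) l x \<nu>\<bar> \<le> \<alpha> k * chain_variation (G (Suc k)) x l"
    using F_step tagged_partition_tags[OF P] by (intro abs_RS_sum_le) auto
  moreover have "\<bar>RS_sum (F k) (\<lambda>t. G (Suc k) t - G k t) l x \<nu>\<bar> \<le> \<beta> k * chain_variation (F k) (case_nat c \<nu>) l"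
    using G_step Fc by (intro abs_RS_sum_by_parts_le[OF P]) auto
  ultimately show ?case using Suc.IH by simp
qed

lemma exists_clipped_approx:
  assumes M: "\<forall>t\<in>{c..d}. \<bar>f t - f c\<bar> \<le> M" and "c \<le> d" "0 \<le> \<delta>" "0 < e"
  shows "\<exists>u. (\<forall>t\<in>{c..d}. \<bar>f t - f c - u t\<bar> \<le> \<delta> \<and> \<bar>u t\<bar> \<le> M) \<and> u c = 0 \<and>
    total_variation u c d \<le> truncated_variation f c d \<delta> + ereal e"
proof -
  obtain v where v: "\<forall>t\<in>{c..d}. \<bar>f t - v t\<bar> \<le> \<delta> / 2"
    "total_variation v c d \<le> truncated_variation f c d \<delta> + ereal e"
    using truncated_variation_approx[OF assms(3,4)] by blast
  define clip where "clip r = max (- M) (min M r)" for r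
  have clip_dist: "\<bar>clip r - clip r'\<bar> \<le> \<bar>r - r'\<bar>" for r r'
    by (auto simp: clip_def max_def min_def abs_if)
  define u where "u t = clip (v t - v c)" for t
  have "0 \<le> M" using M \<open>c \<le> d\<close> by (metis abs_ge_zero atLeastAtMost_iff order_refl order_trans)
  have "\<bar>f t - f c - u t\<bar> \<le> \<delta> \<and> \<bar>u t\<bar> \<le> M" if t: "t \<in> {c..d}" for t
  proof
    have "\<bar>f t - f c\<bar> \<le> M" using M t by blast
    then have "f t - f c = clip (f t - f c)" by (simp add: clip_def abs_le_iff max_def min_def)
    then have "\<bar>f t - f c - u t\<bar> \<le> \<bar>f t - v t\<bar> + \<bar>f c - v c\<bar>"
      using clip_dist[of "f t - f c" "v t - v c"] by (simp add: u_def)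
    also have "\<dots> \<le> \<delta>"
    proof -
      have "\<bar>f t - v t\<bar> \<le> \<delta> / 2" "\<bar>f c - v c\<bar> \<le> \<delta> / 2" using v(1) t \<open>c \<le> d\<close> by auto
      then show ?thesis by linarith
    qed
    finally show "\<bar>f t - f c - u t\<bar> \<le> \<delta>" .
    show "\<bar>u t\<bar> \<le> M" using \<open>0 \<le> M\<close> by (simp add: u_def clip_def)
  qed
  moreover have "u c = 0" using \<open>0 \<le> M\<close> by (simp add: u_def clip_def)
  moreover have "total_variation u c d \<le> total_variation v c d"
  proof (rule total_variation_mono_dominated)
    fix s t
    show "\<bar>u s - u t\<bar> \<le> \<bar>v s - v t\<bar>" using clip_dist[of "v s - v c" "v t - v c"] by (simp add: u_def)
  qed
  ultimately show ?thesis using order_trans[OF _ v(2)] by blast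
qed

lemma ereal_mult_le_add:
  fixes a v e :: real and T :: ereal
  assumes "0 \<le> a" "0 \<le> T" "ereal v \<le> T + ereal e"
  shows "ereal (a * v) \<le> ereal a * T + ereal (a * e)"
proof (cases T)
  case (real r)
  with assms have "a * v \<le> a * (r + e)" by (intro mult_left_mono) auto
  with real show ?thesis by (simp add: distrib_left)
next
  case PInf
  then show ?thesis using assms(1) by (cases "a = 0") auto
qed (use assms(2) in simp)

lemma sum_adjacent_le_sum_pow2:
  fixes X :: "nat \<Rightarrow> ereal"
  assumes "\<And>k. 0 \<le> X k"
  shows "(\<Sum>k<n. X k + X (Suc k)) \<le> (\<Sum>k<Suc n. ereal (2 ^ k) * X k)"
proof -
  have double: "X k + X k \<le> ereal (2 ^ k) * X k" if "0 < k" for k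
  proof -
    have "X k + X k = ereal 2 * X k" using assms[of k] by (cases "X k") auto
    also have "\<dots> \<le> ereal (2 ^ k) * X k"
      using that assms[of k] by (intro ereal_mult_right_mono) (auto simp: self_le_power)
    finally show ?thesis .
  qed
  have "(\<Sum>k<n. X k + X (Suc k)) + X n \<le> (\<Sum>k<Suc n. ereal (2 ^ k) * X k)"
  proof (induction n)
    case (Suc n)
    have "(\<Sum>k<Suc n. X k + X (Suc k)) + X (Suc n) = ((\<Sum>k<n. X k + X (Suc k)) + X n) + (X (Suc n) + X (Suc n))"
      by (simp add: ac_simps)
    also have "\<dots> \<le> (\<Sum>k<Suc (Suc n). ereal (2 ^ k) * X k)"
      using Suc.IH double[of "Suc n"] by (simp add: add_mono)
    finally show ?case .
  qed simp
  moreover have "(\<Sum>k<n. X k + X (Suc k)) \<le> (\<Sum>k<n. X k + X (Suc k)) + X n"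
    by (rule add_increasing2[OF assms order_refl])
  ultimately show ?thesis by (rule order_trans[rotated])
qed

lemma sum_geometric_half_le: "0 \<le> \<epsilon> \<Longrightarrow> (\<Sum>k<n. \<epsilon> / 2 ^ k) \<le> 2 * (\<epsilon>::real)"
proof -
  have "(\<Sum>k<n. \<epsilon> / 2 ^ k) = 2 * \<epsilon> - 2 * \<epsilon> / 2 ^ n"
    by (induction n) (simp_all add: field_simps)
  moreover assume "0 \<le> \<epsilon>"
  ultimately show ?thesis by simp
qed

lemma abs_RS_sum_approx_le:
  assumes P: "tagged_partition c d l x \<nu>"
    and F: "\<forall>t\<in>{c..d}. \<bar>f t - F t\<bar> \<le> r \<and> \<bar>F t\<bar> \<le> M" and G: "\<forall>t\<in>{c..d}. \<bar>g t - G t\<bar> \<le> s"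
  shows "\<bar>RS_sum f g l x \<nu> - RS_sum F G l x \<nu>\<bar> \<le> r * chain_variation g x l + M * (2 * s * l)"
proof -
  have split: "RS_sum f g l x \<nu> - RS_sum F G l x \<nu> =
      RS_sum (\<lambda>t. f t - F t) g l x \<nu> + RS_sum F (\<lambda>t. g t - G t) l x \<nu>"
    by (simp add: RS_sum_diff_left RS_sum_diff_right)
  have first: "\<bar>RS_sum (\<lambda>t. f t - F t) g l x \<nu>\<bar> \<le> r * chain_variation g x l"
    using F tagged_partition_tags[OF P] by (intro abs_RS_sum_le) auto
  have "chain_variation (\<lambda>t. g t - G t) x l \<le> (\<Sum>i<l. 2 * s)"
    unfolding chain_variation_def
  proof (rule sum_mono)
    fix i assume "i \<in> {..<l}"
    then have "\<bar>g (x i) - G (x i)\<bar> \<le> s" "\<bar>g (x (Suc i)) - G (x (Suc i))\<bar> \<le> s"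
      using G tagged_partition_points[OF P, of i] tagged_partition_points[OF P, of "Suc i"] by auto
    then show "\<bar>g (x (Suc i)) - G (x (Suc i)) - (g (x i) - G (x i))\<bar> \<le> 2 * s" by linarith
  qed
  moreover have "0 \<le> M"
    using F tagged_partition_le[OF P] by (metis abs_ge_zero atLeastAtMost_iff order_refl order_trans)
  ultimately have "M * chain_variation (\<lambda>t. g t - G t) x l \<le> M * (2 * s * l)"
    by (simp add: mult_left_mono mult.commute)
  moreover have "\<bar>RS_sum F (\<lambda>t. g t - G t) l x \<nu>\<bar> \<le> M * chain_variation (\<lambda>t. g t - G t) x l"
    using F tagged_partition_tags[OF P] by (intro abs_RS_sum_le) auto
  ultimately show ?thesis
    using first unfolding split by linarith
qed

lemma sum_weighted_variations_le_series:
  fixes a c v :: "nat \<Rightarrow> real" and T :: "nat \<Rightarrow> ereal"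
  assumes "0 \<le> \<epsilon>" and a: "\<forall>k. 0 \<le> a k \<and> a k \<le> c k \<and> a k \<le> K" and T: "\<forall>k. 0 \<le> T k"
    and v: "\<forall>k. ereal (v k) \<le> T k + ereal (\<epsilon> / 2 ^ k)"
  shows "ereal (\<Sum>k<n. a k * v k) \<le> (\<Sum>k. ereal (c k) * T k) + ereal (2 * K * \<epsilon>)"
proof -
  have "0 \<le> K" using a by (meson order_trans)
  have "ereal (a k * v k) \<le> ereal (c k) * T k + ereal (K * (\<epsilon> / 2 ^ k))" for k
  proof -
    have "a k * (\<epsilon> / 2 ^ k) \<le> K * (\<epsilon> / 2 ^ k)" using a \<open>0 \<le> \<epsilon>\<close> by (intro mult_right_mono) auto
    then have "ereal (a k) * T k + ereal (a k * (\<epsilon> / 2 ^ k)) \<le> ereal (c k) * T k + ereal (K * (\<epsilon> / 2 ^ k))"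
      using a T by (intro add_mono ereal_mult_right_mono) simp_all
    with ereal_mult_le_add[of "a k" "T k" "v k"] a T v show ?thesis by (meson order_trans)
  qed
  then have "ereal (\<Sum>k<n. a k * v k) \<le> (\<Sum>k<n. ereal (c k) * T k) + ereal (K * (\<Sum>k<n. \<epsilon> / 2 ^ k))"
    unfolding sum_ereal[symmetric] sum_distrib_left sum.distrib[symmetric] by (rule sum_mono)
  also have "\<dots> \<le> (\<Sum>k. ereal (c k) * T k) + ereal (2 * K * \<epsilon>)"
  proof (intro add_mono suminf_upper)
    show "0 \<le> ereal (c k) * T k" for k using a T by (meson ereal_0_le_mult ereal_less_eq(5) order_trans)
    show "ereal (K * (\<Sum>k<n. \<epsilon> / 2 ^ k)) \<le> ereal (2 * K * \<epsilon>)"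
      using mult_left_mono[OF sum_geometric_half_le[OF \<open>0 \<le> \<epsilon>\<close>] \<open>0 \<le> K\<close>] by (simp add: mult_ac)
  qed
  finally show ?thesis .
qed

lemma sum_adjacent_weighted_variations_le_series:
  fixes \<theta> v :: "nat \<Rightarrow> real" and T :: "nat \<Rightarrow> ereal"
  assumes "0 \<le> \<epsilon>" and \<theta>: "\<forall>k. 0 \<le> \<theta> k \<and> \<theta> k + \<theta> (Suc k) \<le> K"
    and T: "\<forall>k. 0 \<le> T k \<and> T k \<le> T (Suc k)" and v: "\<forall>k. ereal (v k) \<le> T k + ereal (\<epsilon> / 2 ^ k)"
  shows "ereal (\<Sum>k<n. (\<theta> k + \<theta> (Suc k)) * v k) \<le> (\<Sum>k. ereal (2 ^ k * \<theta> k) * T k) + ereal (2 * K * \<epsilon>)"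
proof -
  define X where "X k = ereal (\<theta> k) * T k" for k
  have X: "0 \<le> X k" for k using \<theta> T by (simp add: X_def)
  have "0 \<le> \<theta> 0" "0 \<le> \<theta> 1" "\<theta> 0 + \<theta> 1 \<le> K" using \<theta> by auto
  then have "0 \<le> K" by linarith
  have "ereal ((\<theta> k + \<theta> (Suc k)) * v k) \<le> (X k + X (Suc k)) + ereal (K * (\<epsilon> / 2 ^ k))" for k
  proof -
    have "ereal (\<theta> k + \<theta> (Suc k)) * T k = X k + ereal (\<theta> (Suc k)) * T k"
      unfolding X_def plus_ereal.simps(1)[symmetric] using \<theta> by (intro ereal_left_distrib) auto
    also have "\<dots> \<le> X k + X (Suc k)"
      unfolding X_def using \<theta> T by (intro add_left_mono ereal_mult_left_mono) auto
    moreover have "(\<theta> k + \<theta> (Suc k)) * (\<epsilon> / 2 ^ k) \<le> K * (\<epsilon> / 2 ^ k)"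
      using \<theta> \<open>0 \<le> \<epsilon>\<close> by (intro mult_right_mono) auto
    ultimately have "ereal (\<theta> k + \<theta> (Suc k)) * T k + ereal ((\<theta> k + \<theta> (Suc k)) * (\<epsilon> / 2 ^ k)) \<le>
        (X k + X (Suc k)) + ereal (K * (\<epsilon> / 2 ^ k))"
      by (intro add_mono) simp_all
    with ereal_mult_le_add[of "\<theta> k + \<theta> (Suc k)" "T k" "v k"] \<theta> T v show ?thesis
      by (meson add_nonneg_nonneg order_trans)
  qed
  then have "ereal (\<Sum>k<n. (\<theta> k + \<theta> (Suc k)) * v k) \<le> (\<Sum>k<n. X k + X (Suc k)) + ereal (K * (\<Sum>k<n. \<epsilon> / 2 ^ k))"
    unfolding sum_ereal[symmetric] sum_distrib_left sum.distrib[symmetric] by (rule sum_mono)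
  also have "\<dots> \<le> (\<Sum>k<Suc n. ereal (2 ^ k) * X k) + ereal (2 * K * \<epsilon>)"
    using sum_adjacent_le_sum_pow2[where X = X and n = n, OF X] mult_left_mono[OF sum_geometric_half_le[OF \<open>0 \<le> \<epsilon>\<close>] \<open>0 \<le> K\<close>]
    by (intro add_mono) (simp_all add: mult_ac)
  also have "(\<Sum>k<Suc n. ereal (2 ^ k) * X k) \<le> (\<Sum>k. ereal (2 ^ k * \<theta> k) * T k)"
    unfolding X_def times_ereal.simps(1)[symmetric] mult.assoc[symmetric] using \<theta> T by (intro suminf_upper) simp
  finally show ?thesis by (simp add: add_right_mono)
qed

lemma abs_RS_sum_approximations_le_levels:
  fixes F G :: "nat \<Rightarrow> real \<Rightarrow> real"
  assumes P: "tagged_partition c d l x \<nu>" and \<eta>: "decreasing_to_zero \<eta>"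
    and F: "\<forall>k. \<forall>t\<in>{c..d}. \<bar>f t - f c - F k t\<bar> \<le> \<eta> k \<and> \<bar>F k t\<bar> \<le> M" "\<forall>k. F k c = 0"
    and G: "\<forall>k. \<forall>t\<in>{c..d}. \<bar>g t - G k t\<bar> \<le> \<theta> k / 2"
  shows "\<bar>RS_sum (F n) (G n) l x \<nu>\<bar> \<le> (\<Sum>k<Suc n. case_nat M (\<lambda>k. 2 * \<eta> k) k * chain_variation (G k) x l) +
    (\<Sum>k<n. (\<theta> k + \<theta> (Suc k)) * chain_variation (F k) (case_nat c \<nu>) l)"
proof -
  have "\<bar>RS_sum (F n) (G n) l x \<nu>\<bar> \<le> M * chain_variation (G 0) x l +
      (\<Sum>k<n. 2 * \<eta> k * chain_variation (G (Suc k)) x l + (\<theta> k + \<theta> (Suc k)) * chain_variation (F k) (case_nat c \<nu>) l)"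
  proof (rule abs_RS_sum_telescoping_le[OF P])
    show "\<forall>t\<in>{c..d}. \<bar>F 0 t\<bar> \<le> M" "\<forall>k. F k c = 0" using F by auto
    show "\<forall>k. \<forall>t\<in>{c..d}. \<bar>F (Suc k) t - F k t\<bar> \<le> 2 * \<eta> k"
    proof (intro allI ballI)
      fix k t assume "t \<in> {c..d}"
      then have "\<bar>f t - f c - F (Suc k) t\<bar> \<le> \<eta> (Suc k)" "\<bar>f t - f c - F k t\<bar> \<le> \<eta> k"
        using F by auto
      moreover have "\<eta> (Suc k) \<le> \<eta> k" by (rule decreasing_to_zeroD(2)[OF \<eta>]) simp
      ultimately show "\<bar>F (Suc k) t - F k t\<bar> \<le> 2 * \<eta> k" by linarith
    qed
    show "\<forall>k. \<forall>s\<in>{c..d}. \<forall>t\<in>{c..d}.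
      \<bar>(G (Suc k) s - G k s) - (G (Suc k) t - G k t)\<bar> \<le> \<theta> k + \<theta> (Suc k)"
    proof (intro allI ballI)
      fix k s t assume "s \<in> {c..d}" "t \<in> {c..d}"
      then have "\<bar>g s - G (Suc k) s\<bar> \<le> \<theta> (Suc k) / 2" "\<bar>g s - G k s\<bar> \<le> \<theta> k / 2"
        "\<bar>g t - G (Suc k) t\<bar> \<le> \<theta> (Suc k) / 2" "\<bar>g t - G k t\<bar> \<le> \<theta> k / 2"
        using G by auto
      then show "\<bar>(G (Suc k) s - G k s) - (G (Suc k) t - G k t)\<bar> \<le> \<theta> k + \<theta> (Suc k)" by linarith
    qed
  qed
  then show ?thesis
    unfolding sum.lessThan_Suc_shift by (simp add: sum.distrib)
qed

lemma abs_RS_sum_approximations_le_series: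
  fixes F G :: "nat \<Rightarrow> real \<Rightarrow> real"
  assumes P: "tagged_partition c d l x \<nu>" and "0 \<le> M" "0 \<le> \<epsilon>"
    and \<eta>: "decreasing_to_zero \<eta>" and \<theta>: "decreasing_to_zero \<theta>"
    and F: "\<forall>k. \<forall>t\<in>{c..d}. \<bar>f t - f c - F k t\<bar> \<le> \<eta> k \<and> \<bar>F k t\<bar> \<le> M" "\<forall>k. F k c = 0"
      "\<forall>k. total_variation (F k) c d \<le> truncated_variation f c d (\<eta> k) + ereal (\<epsilon> / 2 ^ k)"
    and G: "\<forall>k. \<forall>t\<in>{c..d}. \<bar>g t - G k t\<bar> \<le> \<theta> k / 2"
      "\<forall>k. total_variation (G k) c d \<le> truncated_variation g c d (\<theta> k) + ereal (\<epsilon> / 2 ^ k)"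
  shows "ereal \<bar>RS_sum (F n) (G n) l x \<nu>\<bar> \<le>
    truncated_variation_series f g M \<eta> \<theta> c d + ereal (4 * (M + 2 * \<eta> 0 + 2 * \<theta> 0) * \<epsilon>)"
proof -
  define K where "K = M + 2 * \<eta> 0 + 2 * \<theta> 0"
  define a where "a = case_nat M (\<lambda>k. 2 * \<eta> k)"
  define vG where "vG k = chain_variation (G k) x l" for k
  define vF where "vF k = chain_variation (F k) (case_nat c \<nu>) l" for k
  note \<eta>D = decreasing_to_zeroD[OF \<eta>] and \<theta>D = decreasing_to_zeroD[OF \<theta>]
  have "ereal \<bar>RS_sum (F n) (G n) l x \<nu>\<bar> \<le>
      ereal (\<Sum>k<Suc n. a k * vG k) + ereal (\<Sum>k<n. (\<theta> k + \<theta> (Suc k)) * vF k)"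
    using abs_RS_sum_approximations_le_levels[OF P \<eta> F(1,2) G(1), of n] by (simp add: a_def vG_def vF_def)
  also have "\<dots> \<le> ((\<Sum>k. ereal (2 ^ k * case_nat M \<eta> k) * truncated_variation g c d (\<theta> k)) + ereal (2 * K * \<epsilon>)) +
      ((\<Sum>k. ereal (2 ^ k * \<theta> k) * truncated_variation f c d (\<eta> k)) + ereal (2 * K * \<epsilon>))"
  proof (rule add_mono)
    have "0 \<le> a k \<and> a k \<le> 2 ^ k * case_nat M \<eta> k \<and> a k \<le> K" for k
    proof (cases k)
      case (Suc j)
      have "2 * \<eta> j \<le> 2 ^ Suc j * \<eta> j" using \<eta>D(1)[of j] by (intro mult_right_mono) auto
      moreover have "\<eta> j \<le> \<eta> 0" by (rule \<eta>D(2)) simp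
      ultimately show ?thesis using Suc \<eta>D(1)[of j] \<open>0 \<le> M\<close> \<theta>D(1)[of 0] by (simp add: a_def K_def)
    qed (use \<open>0 \<le> M\<close> \<eta>D(1)[of 0] \<theta>D(1)[of 0] in \<open>simp add: a_def K_def\<close>)
    moreover have "ereal (vG k) \<le> truncated_variation g c d (\<theta> k) + ereal (\<epsilon> / 2 ^ k)" for k
      using order_trans[OF chain_variation_le_total_variation_partition[OF P] G(2)[rule_format]]
      by (simp add: vG_def)
    ultimately show "ereal (\<Sum>k<Suc n. a k * vG k) \<le>
        (\<Sum>k. ereal (2 ^ k * case_nat M \<eta> k) * truncated_variation g c d (\<theta> k)) + ereal (2 * K * \<epsilon>)"
      using \<open>0 \<le> \<epsilon>\<close> by (intro sum_weighted_variations_le_series) (auto simp: truncated_variation_nonneg)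
    have "0 \<le> \<theta> k \<and> \<theta> k + \<theta> (Suc k) \<le> K" for k
      using \<theta>D(1)[of k] \<theta>D(2)[of 0 k] \<theta>D(2)[of 0 "Suc k"] \<eta>D(1)[of 0] \<open>0 \<le> M\<close> by (auto simp: K_def)
    moreover have "truncated_variation f c d (\<eta> k) \<le> truncated_variation f c d (\<eta> (Suc k))" for k
      by (intro truncated_variation_antimono \<eta>D(2)) simp
    moreover have "ereal (vF k) \<le> truncated_variation f c d (\<eta> k) + ereal (\<epsilon> / 2 ^ k)" for k
      using order_trans[OF chain_variation_tags_le_total_variation[OF P] F(3)[rule_format]]
      by (simp add: vF_def)
    ultimately show "ereal (\<Sum>k<n. (\<theta> k + \<theta> (Suc k)) * vF k) \<le>
        (\<Sum>k. ereal (2 ^ k * \<theta> k) * truncated_variation f c d (\<eta> k)) + ereal (2 * K * \<epsilon>)"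
      using \<open>0 \<le> \<epsilon>\<close> by (intro sum_adjacent_weighted_variations_le_series) (auto simp: truncated_variation_nonneg)
  qed
  also have "\<dots> = truncated_variation_series f g M \<eta> \<theta> c d + (ereal (2 * K * \<epsilon>) + ereal (2 * K * \<epsilon>))"
    unfolding truncated_variation_series_def by (simp only: ac_simps)
  also have "ereal (2 * K * \<epsilon>) + ereal (2 * K * \<epsilon>) = ereal (4 * (M + 2 * \<eta> 0 + 2 * \<theta> 0) * \<epsilon>)"
    by (simp add: K_def algebra_simps)
  finally show ?thesis .
qed

lemma exists_approximation_families:
  assumes M: "\<forall>t\<in>{c..d}. \<bar>f t - f c\<bar> \<le> M" and "c \<le> d" "\<forall>k. 0 \<le> \<eta> k" "\<forall>k. 0 \<le> \<theta> k" "0 < \<epsilon>'"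
  obtains F G :: "nat \<Rightarrow> real \<Rightarrow> real" where
    "\<forall>k. \<forall>t\<in>{c..d}. \<bar>f t - f c - F k t\<bar> \<le> \<eta> k \<and> \<bar>F k t\<bar> \<le> M" "\<forall>k. F k c = 0"
    "\<forall>k. total_variation (F k) c d \<le> truncated_variation f c d (\<eta> k) + ereal (\<epsilon>' / 2 ^ k)"
    "\<forall>k. \<forall>t\<in>{c..d}. \<bar>g t - G k t\<bar> \<le> \<theta> k / 2"
    "\<forall>k. total_variation (G k) c d \<le> truncated_variation g c d (\<theta> k) + ereal (\<epsilon>' / 2 ^ k)"
proof -
  have "\<forall>k. \<exists>u. (\<forall>t\<in>{c..d}. \<bar>f t - f c - u t\<bar> \<le> \<eta> k \<and> \<bar>u t\<bar> \<le> M) \<and> u c = 0 \<and>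
      total_variation u c d \<le> truncated_variation f c d (\<eta> k) + ereal (\<epsilon>' / 2 ^ k)"
    using exists_clipped_approx[OF M \<open>c \<le> d\<close>] assms(3,5) by simp
  then obtain F where F: "\<forall>k. (\<forall>t\<in>{c..d}. \<bar>f t - f c - F k t\<bar> \<le> \<eta> k \<and> \<bar>F k t\<bar> \<le> M) \<and> F k c = 0 \<and>
      total_variation (F k) c d \<le> truncated_variation f c d (\<eta> k) + ereal (\<epsilon>' / 2 ^ k)"
    by metis
  have "\<forall>k. \<exists>v. (\<forall>t\<in>{c..d}. \<bar>g t - v t\<bar> \<le> \<theta> k / 2) \<and>
      total_variation v c d \<le> truncated_variation g c d (\<theta> k) + ereal (\<epsilon>' / 2 ^ k)"
    using truncated_variation_approx assms(4,5) by simp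
  then obtain G where G: "\<forall>k. (\<forall>t\<in>{c..d}. \<bar>g t - G k t\<bar> \<le> \<theta> k / 2) \<and>
      total_variation (G k) c d \<le> truncated_variation g c d (\<theta> k) + ereal (\<epsilon>' / 2 ^ k)"
    by metis
  show thesis by (rule that[of F G]) (use F G in blast)+
qed

text \<open>The main estimate: approximate \<open>f - f c\<close> and \<open>g\<close> by the near-optimal functions of
  the truncated variations at levels \<open>\<eta> k\<close> and \<open>\<theta> k\<close>, expand along the levels, and let
  the level and the slack \<open>\<epsilon>\<close> of the approximations tend to their limits.\<close>
lemma RS_sum_deviation_le_series:
  assumes P: "tagged_partition c d l x \<nu>" and M: "\<forall>t\<in>{c..d}. \<bar>f t - f c\<bar> \<le> M"
    and \<eta>: "decreasing_to_zero \<eta>" and \<theta>: "decreasing_to_zero \<theta>"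
  shows "ereal \<bar>RS_sum f g l x \<nu> - f c * (g d - g c)\<bar> \<le> truncated_variation_series f g M \<eta> \<theta> c d"
proof (rule ereal_le_epsilon2)
  fix \<epsilon> :: real assume "0 < \<epsilon>"
  have "c \<le> d" by (rule tagged_partition_le[OF P])
  then have "0 \<le> M" using M by (metis abs_ge_zero atLeastAtMost_iff order_refl order_trans)
  note \<eta>D = decreasing_to_zeroD[OF \<eta>] and \<theta>D = decreasing_to_zeroD[OF \<theta>]
  define K where "K = 4 * (M + 2 * \<eta> 0 + 2 * \<theta> 0)"
  have "0 \<le> K" using \<open>0 \<le> M\<close> \<eta>D(1) \<theta>D(1) by (simp add: K_def)
  define \<epsilon>' where "\<epsilon>' = \<epsilon> / (2 * (K + 1))"
  have "0 < \<epsilon>'" "K * \<epsilon>' \<le> \<epsilon> / 2"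
    using \<open>0 < \<epsilon>\<close> \<open>0 \<le> K\<close> by (auto simp: \<epsilon>'_def field_simps)
  obtain F G where F: "\<forall>k. \<forall>t\<in>{c..d}. \<bar>f t - f c - F k t\<bar> \<le> \<eta> k \<and> \<bar>F k t\<bar> \<le> M" "\<forall>k. F k c = 0"
      "\<forall>k. total_variation (F k) c d \<le> truncated_variation f c d (\<eta> k) + ereal (\<epsilon>' / 2 ^ k)"
    and G: "\<forall>k. \<forall>t\<in>{c..d}. \<bar>g t - G k t\<bar> \<le> \<theta> k / 2"
      "\<forall>k. total_variation (G k) c d \<le> truncated_variation g c d (\<theta> k) + ereal (\<epsilon>' / 2 ^ k)"
    by (rule exists_approximation_families[OF M \<open>c \<le> d\<close> allI[OF \<eta>D(1)] allI[OF \<theta>D(1)] \<open>0 < \<epsilon>'\<close>])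
  define V where "V = chain_variation g x l"
  have "(\<lambda>n. \<eta> n * V + M * (2 * (\<theta> n / 2) * l)) \<longlonglongrightarrow> 0 * V + M * (2 * (0 / 2) * l)"
    by (intro tendsto_intros \<eta>D(3) \<theta>D(3)) simp
  then have "\<forall>\<^sub>F n in sequentially. \<eta> n * V + M * (2 * (\<theta> n / 2) * l) < \<epsilon> / 2"
    by (rule order_tendstoD(2)) (simp add: \<open>0 < \<epsilon>\<close>)
  then obtain n where n: "\<eta> n * V + M * (2 * (\<theta> n / 2) * l) < \<epsilon> / 2"
    unfolding eventually_sequentially by blast
  have "RS_sum f g l x \<nu> - f c * (g d - g c) = RS_sum (\<lambda>t. f t - f c) g l x \<nu>"
    using P by (simp add: RS_sum_diff_left RS_sum_const_left tagged_partition_def)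
  moreover have "\<bar>RS_sum (\<lambda>t. f t - f c) g l x \<nu> - RS_sum (F n) (G n) l x \<nu>\<bar> \<le>
      \<eta> n * V + M * (2 * (\<theta> n / 2) * l)"
    unfolding V_def using F(1) G(1) by (intro abs_RS_sum_approx_le[OF P]) auto
  ultimately have "ereal \<bar>RS_sum f g l x \<nu> - f c * (g d - g c)\<bar> \<le>
      ereal \<bar>RS_sum (F n) (G n) l x \<nu>\<bar> + ereal (\<epsilon> / 2)"
    using n by simp
  also have "\<dots> \<le> (truncated_variation_series f g M \<eta> \<theta> c d + ereal (K * \<epsilon>')) + ereal (\<epsilon> / 2)"
    unfolding K_def using \<open>0 \<le> M\<close> \<open>0 < \<epsilon>'\<close>
    by (intro add_right_mono abs_RS_sum_approximations_le_series[OF P _ _ \<eta> \<theta> F G]) simp_all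
  also have "\<dots> \<le> truncated_variation_series f g M \<eta> \<theta> c d + ereal \<epsilon>"
    using \<open>K * \<epsilon>' \<le> \<epsilon> / 2\<close> by (simp add: add.assoc add_left_mono)
  finally show "ereal \<bar>RS_sum f g l x \<nu> - f c * (g d - g c)\<bar> \<le>
      truncated_variation_series f g M \<eta> \<theta> c d + ereal \<epsilon>" .
qed

lemma regulated_left_limit:
  assumes "regulated h a b" "a < x" "x \<le> b"
  shows "\<exists>L. (h \<longlongrightarrow> L) (at_left x)"
proof (cases "x = b")
  case False
  with assms(2,3) have "x \<in> {a<..<b}" by auto
  with assms(1) show ?thesis unfolding regulated_def by blast
qed (use assms(1) in \<open>simp add: regulated_def\<close>)

lemma regulated_right_limit:
  assumes "regulated h a b" "a \<le> x" "x < b"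
  shows "\<exists>L. (h \<longlongrightarrow> L) (at_right x)"
proof (cases "x = a")
  case False
  with assms(2,3) have "x \<in> {a<..<b}" by auto
  with assms(1) show ?thesis unfolding regulated_def by blast
qed (use assms(1) in \<open>simp add: regulated_def\<close>)

lemma regulated_one_sided_oscillation:
  assumes reg: "regulated h a b" and x: "x \<in> {a..b}" and "0 < \<epsilon>"
  shows "\<exists>r>0. (\<forall>s t. x - r < s \<and> s < x \<and> x - r < t \<and> t < x \<and> a < x \<longrightarrow> \<bar>h s - h t\<bar> \<le> \<epsilon>) \<and>
    (\<forall>s t. x < s \<and> s < x + r \<and> x < t \<and> t < x + r \<and> x < b \<longrightarrow> \<bar>h s - h t\<bar> \<le> \<epsilon>)"
proof -
  have close: "\<bar>h s - h t\<bar> \<le> \<epsilon>" if "\<bar>h s - L\<bar> < \<epsilon> / 2" "\<bar>h t - L\<bar> < \<epsilon> / 2" for s t L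
    using that by linarith
  obtain r1 where r1: "r1 > 0" "\<forall>s t. x - r1 < s \<and> s < x \<and> x - r1 < t \<and> t < x \<and> a < x \<longrightarrow> \<bar>h s - h t\<bar> \<le> \<epsilon>"
  proof (cases "a < x")
    case True
    then obtain L where "(h \<longlongrightarrow> L) (at_left x)"
      using regulated_left_limit[OF reg] x by auto
    then have "\<forall>\<^sub>F y in at_left x. \<bar>h y - L\<bar> < \<epsilon> / 2"
      using \<open>0 < \<epsilon>\<close> unfolding tendsto_iff dist_real_def by (meson half_gt_zero)
    then obtain c where "c < x" "\<forall>y>c. y < x \<longrightarrow> \<bar>h y - L\<bar> < \<epsilon> / 2"
      unfolding eventually_at_left_field by blast
    with close that[of "x - c"] show ?thesis by auto
  qed (use that[of 1] in auto)
  obtain r2 where r2: "r2 > 0" "\<forall>s t. x < s \<and> s < x + r2 \<and> x < t \<and> t < x + r2 \<and> x < b \<longrightarrow> \<bar>h s - h t\<bar> \<le> \<epsilon>"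
  proof (cases "x < b")
    case True
    then obtain L where "(h \<longlongrightarrow> L) (at_right x)"
      using regulated_right_limit[OF reg] x by auto
    then have "\<forall>\<^sub>F y in at_right x. \<bar>h y - L\<bar> < \<epsilon> / 2"
      using \<open>0 < \<epsilon>\<close> unfolding tendsto_iff dist_real_def by (meson half_gt_zero)
    then obtain c where "x < c" "\<forall>y>x. y < c \<longrightarrow> \<bar>h y - L\<bar> < \<epsilon> / 2"
      unfolding eventually_at_right_field by blast
    with close that[of "c - x"] show ?thesis by auto
  qed (use that[of 1] in auto)
  show ?thesis
  proof (intro exI[of _ "min r1 r2"] conjI allI impI)
    fix s t
    assume "x - min r1 r2 < s \<and> s < x \<and> x - min r1 r2 < t \<and> t < x \<and> a < x"
    then have "x - r1 < s \<and> s < x \<and> x - r1 < t \<and> t < x \<and> a < x" by linarith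
    then show "\<bar>h s - h t\<bar> \<le> \<epsilon>" using r1(2) by blast
  next
    fix s t
    assume "x < s \<and> s < x + min r1 r2 \<and> x < t \<and> t < x + min r1 r2 \<and> x < b"
    then have "x < s \<and> s < x + r2 \<and> x < t \<and> t < x + r2 \<and> x < b" by linarith
    then show "\<bar>h s - h t\<bar> \<le> \<epsilon>" using r2(2) by blast
  qed (use r1 r2 in simp)
qed

lemma regulated_finite_gaps:
  assumes reg: "regulated h a b" and "0 < \<epsilon>"
  shows "\<exists>T. finite T \<and> T \<subseteq> {a..b} \<and>
    (\<forall>s t. a \<le> s \<longrightarrow> s \<le> t \<longrightarrow> t \<le> b \<longrightarrow> {s..t} \<inter> T = {} \<longrightarrow> \<bar>h s - h t\<bar> \<le> \<epsilon>)"
proof -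
  have "\<forall>x\<in>{a..b}. \<exists>r>0. (\<forall>s t. x - r < s \<and> s < x \<and> x - r < t \<and> t < x \<and> a < x \<longrightarrow> \<bar>h s - h t\<bar> \<le> \<epsilon>) \<and>
    (\<forall>s t. x < s \<and> s < x + r \<and> x < t \<and> t < x + r \<and> x < b \<longrightarrow> \<bar>h s - h t\<bar> \<le> \<epsilon>)"
    using regulated_one_sided_oscillation[OF reg _ \<open>0 < \<epsilon>\<close>] by blast
  then obtain r where r: "\<forall>x\<in>{a..b}. r x > 0 \<and>
    (\<forall>s t. x - r x < s \<and> s < x \<and> x - r x < t \<and> t < x \<and> a < x \<longrightarrow> \<bar>h s - h t\<bar> \<le> \<epsilon>) \<and>
    (\<forall>s t. x < s \<and> s < x + r x \<and> x < t \<and> t < x + r x \<and> x < b \<longrightarrow> \<bar>h s - h t\<bar> \<le> \<epsilon>)"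
    by (rule bchoice[THEN exE]) blast
  have cover: "{a..b} \<subseteq> (\<Union>x\<in>{a..b}. ball x (r x))"
  proof
    fix y assume "y \<in> {a..b}"
    moreover from this have "y \<in> ball y (r y)" using r by simp
    ultimately show "y \<in> (\<Union>x\<in>{a..b}. ball x (r x))" by blast
  qed
  obtain C where C: "C \<subseteq> {a..b}" "finite C" "{a..b} \<subseteq> (\<Union>x\<in>C. ball x (r x))"
    using compactE_image[OF compact_Icc _ cover] by blast
  define T where "T = (C \<union> (\<lambda>x. x - r x) ` C \<union> (\<lambda>x. x + r x) ` C) \<inter> {a..b}"
  have "\<bar>h s - h t\<bar> \<le> \<epsilon>" if st: "a \<le> s" "s \<le> t" "t \<le> b" "{s..t} \<inter> T = {}" for s t
  proof -
    obtain x where x: "x \<in> C" "\<bar>s - x\<bar> < r x"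
      using C(3) st by (force simp: dist_real_def)
    have "x \<in> {a..b}" using x C(1) by auto
    have outside: "p \<notin> {s..t}" if "p \<in> {x, x - r x, x + r x}" for p
      using that st x(1) C(1) by (auto simp: T_def)
    note left = r[rule_format, OF \<open>x \<in> {a..b}\<close>, THEN conjunct2, THEN conjunct1, rule_format]
    note right = r[rule_format, OF \<open>x \<in> {a..b}\<close>, THEN conjunct2, THEN conjunct2, rule_format]
    show ?thesis
    proof (cases "s < x")
      case True
      with outside[of x] outside[of "x - r x"] x(2) st(2) have "x - r x < s" "t < x" by auto
      with True st show ?thesis by (intro left) auto
    next
      case False
      with outside[of x] outside[of "x + r x"] x(2) st(2) have "x < s" "t < x + r x" by auto
      with st show ?thesis by (intro right) auto
    qed
  qed
  moreover have "finite T" "T \<subseteq> {a..b}" using C(2) by (auto simp: T_def)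
  ultimately show ?thesis by blast
qed

lemma finite_points_monotone_projection:
  fixes T :: "real set"
  assumes T: "finite T" "T \<subseteq> {a..b}" "a \<in> T" "b \<in> T"
  shows "\<exists>\<pi> V. finite V \<and> V \<subseteq> {a..b} \<and> \<pi> ` {a..b} \<subseteq> V \<and>
    (\<forall>s t. a \<le> s \<longrightarrow> s \<le> t \<longrightarrow> t \<le> b \<longrightarrow> \<pi> s \<le> \<pi> t) \<and>
    (\<forall>t\<in>{a..b}. \<pi> t = t \<or> {min t (\<pi> t)..max t (\<pi> t)} \<inter> T = {})"
proof -
  define lo where "lo t = Max {s\<in>T. s \<le> t}" for t
  define hi where "hi t = Min {s\<in>T. t \<le> s}" for t
  define \<pi> where "\<pi> t = (lo t + hi t) / 2" for t
  define V where "V = (\<lambda>z. (fst z + snd z) / 2) ` (T \<times> T)"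
  have lo: "lo t \<in> T" "lo t \<le> t" "\<And>s. s \<in> T \<Longrightarrow> s \<le> t \<Longrightarrow> s \<le> lo t" if "t \<in> {a..b}" for t
  proof -
    have fin: "finite {s\<in>T. s \<le> t}" and "{s\<in>T. s \<le> t} \<noteq> {}" using T that by auto
    then have "lo t \<in> {s\<in>T. s \<le> t}" unfolding lo_def by (rule Max_in)
    then show "lo t \<in> T" "lo t \<le> t" by auto
    show "s \<le> lo t" if "s \<in> T" "s \<le> t" for s unfolding lo_def using fin that by (intro Max_ge) auto
  qed
  have hi: "hi t \<in> T" "t \<le> hi t" "\<And>s. s \<in> T \<Longrightarrow> t \<le> s \<Longrightarrow> hi t \<le> s" if "t \<in> {a..b}" for t
  proof -
    have fin: "finite {s\<in>T. t \<le> s}" and "{s\<in>T. t \<le> s} \<noteq> {}" using T that by auto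
    then have "hi t \<in> {s\<in>T. t \<le> s}" unfolding hi_def by (rule Min_in)
    then show "hi t \<in> T" "t \<le> hi t" by auto
    show "hi t \<le> s" if "s \<in> T" "t \<le> s" for s unfolding hi_def using fin that by (intro Min_le) auto
  qed
  have "\<pi> s \<le> \<pi> t" if "a \<le> s" "s \<le> t" "t \<le> b" for s t
  proof -
    have "lo s \<le> lo t" "hi s \<le> hi t"
      using lo[of s] lo[of t] hi[of s] hi[of t] that by (meson atLeastAtMost_iff order_trans)+
    then show ?thesis by (simp add: \<pi>_def)
  qed
  moreover have "\<pi> ` {a..b} \<subseteq> V"
    using lo(1) hi(1) by (force simp: \<pi>_def V_def)
  moreover have "(u + v) / 2 \<in> {a..b}" if "u \<in> T" "v \<in> T" for u v
  proof -
    have "a \<le> u" "u \<le> b" "a \<le> v" "v \<le> b" using T(2) that by auto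
    then show ?thesis by simp
  qed
  then have "V \<subseteq> {a..b}" "finite V" using T(1) by (auto simp: V_def)
  moreover have "\<pi> t = t \<or> {min t (\<pi> t)..max t (\<pi> t)} \<inter> T = {}" if t: "t \<in> {a..b}" for t
  proof (cases "t \<in> T")
    case True
    then have "lo t = t" "hi t = t" using lo[OF t] hi[OF t] by (meson order_antisym order_refl)+
    then show ?thesis by (simp add: \<pi>_def)
  next
    case False
    then have "lo t < t" "t < hi t" using lo[OF t] hi[OF t] by (metis order_le_less)+
    then have "{min t (\<pi> t)..max t (\<pi> t)} \<subseteq> {lo t<..<hi t}" by (auto simp: \<pi>_def min_def max_def)
    moreover have "q \<notin> {lo t<..<hi t}" if "q \<in> T" for q
      using lo(3)[OF t that] hi(3)[OF t that] by (cases "q \<le> t") auto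
    ultimately show ?thesis by blast
  qed
  ultimately show ?thesis by (intro exI[of _ \<pi>] exI[of _ V]) blast
qed

lemma regulated_step_approx:
  assumes reg: "regulated h a b" and "a \<le> b" "0 < \<epsilon>"
  shows "\<exists>\<pi> V. finite V \<and> V \<subseteq> {a..b} \<and> \<pi> ` {a..b} \<subseteq> V \<and>
    (\<forall>s t. a \<le> s \<longrightarrow> s \<le> t \<longrightarrow> t \<le> b \<longrightarrow> \<pi> s \<le> \<pi> t) \<and> (\<forall>t\<in>{a..b}. \<bar>h t - h (\<pi> t)\<bar> \<le> \<epsilon>)"
proof -
  obtain T where T: "finite T" "T \<subseteq> {a..b}"
    "\<And>s t. a \<le> s \<Longrightarrow> s \<le> t \<Longrightarrow> t \<le> b \<Longrightarrow> {s..t} \<inter> T = {} \<Longrightarrow> \<bar>h s - h t\<bar> \<le> \<epsilon>"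
    using regulated_finite_gaps[OF reg \<open>0 < \<epsilon>\<close>] by (elim exE conjE) auto
  obtain \<pi> V where \<pi>: "finite V" "V \<subseteq> {a..b}" "\<pi> ` {a..b} \<subseteq> V"
    "\<forall>s t. a \<le> s \<longrightarrow> s \<le> t \<longrightarrow> t \<le> b \<longrightarrow> \<pi> s \<le> \<pi> t"
    "\<forall>t\<in>{a..b}. \<pi> t = t \<or> {min t (\<pi> t)..max t (\<pi> t)} \<inter> insert a (insert b T) = {}"
  proof -
    have "finite (insert a (insert b T))" "insert a (insert b T) \<subseteq> {a..b}"
      using T(1,2) \<open>a \<le> b\<close> by auto
    from finite_points_monotone_projection[OF this] show thesis using that by blast
  qed
  have approx: "\<bar>h t - h (\<pi> t)\<bar> \<le> \<epsilon>" if t: "t \<in> {a..b}" for t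
  proof -
    have "\<pi> t \<in> {a..b}" using \<pi>(2,3) t by (meson image_subset_iff subsetD)
    show ?thesis
    proof (cases "\<pi> t = t")
      case False
      then have gap: "{min t (\<pi> t)..max t (\<pi> t)} \<inter> T = {}" using \<pi>(5) t by blast
      show ?thesis
      proof (cases "t \<le> \<pi> t")
        case True
        with gap T(3)[of t "\<pi> t"] t \<open>\<pi> t \<in> {a..b}\<close> show ?thesis by simp
      next
        case False
        with gap T(3)[of "\<pi> t" t] t \<open>\<pi> t \<in> {a..b}\<close> show ?thesis by (simp add: abs_minus_commute)
      qed
    qed (simp add: \<open>0 < \<epsilon>\<close> less_imp_le)
  qed
  show ?thesis
    by (rule exI[of _ \<pi>], rule exI[of _ V]) (use \<pi>(1-4) approx in blast)
qed

lemma total_variation_comp_monotone_le: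
  fixes \<pi> :: "real \<Rightarrow> real"
  assumes mono: "\<forall>s t. a \<le> s \<longrightarrow> s \<le> t \<longrightarrow> t \<le> b \<longrightarrow> \<pi> s \<le> \<pi> t"
    and V: "\<pi> ` {a..b} \<subseteq> V" "finite V" and B: "\<forall>v\<in>V. \<bar>h v\<bar> \<le> B"
  shows "total_variation (\<lambda>t. h (\<pi> t)) a b \<le> ereal (2 * B * card V)"
proof (rule total_variation_least)
  have "0 \<le> B" if "v \<in> V" for v using B that abs_ge_zero[of "h v"] by fastforce
  then show "0 \<le> ereal (2 * B * card V)" by (cases "V = {}") auto
next
  fix l x
  assume x: "\<forall>i\<le>l. a \<le> x i \<and> x i \<le> b" "\<forall>i<l. x i < x (Suc i)"
  have inV: "\<pi> (x i) \<in> V" if "i \<le> l" for i using V(1) x(1) that by auto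
  have "0 \<le> B" using B inV[of 0] abs_ge_zero[of "h (\<pi> (x 0))"] by fastforce
  define J where "J = {i. i < l \<and> \<pi> (x i) \<noteq> \<pi> (x (Suc i))}"
  have jump: "\<bar>h (\<pi> (x (Suc i))) - h (\<pi> (x i))\<bar> \<le> 2 * B" if "i < l" for i
  proof -
    have "\<bar>h (\<pi> (x (Suc i)))\<bar> \<le> B" "\<bar>h (\<pi> (x i))\<bar> \<le> B"
      using B inV[of "Suc i"] inV[of i] that by auto
    then show ?thesis by linarith
  qed
  have "inj_on (\<lambda>i. \<pi> (x (Suc i))) J"
  proof (rule linorder_inj_onI)
    fix i j assume ij: "i < j" "i \<in> J" "j \<in> J"
    then have "j < l" by (simp add: J_def)
    have "x (Suc i) \<le> x j" using chain_mono[of l x "Suc i" j] x(2) ij \<open>j < l\<close> by (auto simp: less_imp_le)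
    moreover have "a \<le> x (Suc i)" "a \<le> x j" "x j \<le> x (Suc j)" "x j \<le> b" "x (Suc j) \<le> b"
      using x \<open>j < l\<close> ij by (auto simp: less_imp_le)
    ultimately have "\<pi> (x (Suc i)) \<le> \<pi> (x j)" "\<pi> (x j) \<le> \<pi> (x (Suc j))"
      using mono by blast+
    moreover have "\<pi> (x j) \<noteq> \<pi> (x (Suc j))" using ij by (simp add: J_def)
    ultimately show "\<pi> (x (Suc i)) \<noteq> \<pi> (x (Suc j))" by (metis order_antisym)
  qed auto
  moreover have "(\<lambda>i. \<pi> (x (Suc i))) ` J \<subseteq> V" using inV by (auto simp: J_def)
  ultimately have "card J \<le> card V" using V(2) by (intro card_inj_on_le)
  have "chain_variation (\<lambda>t. h (\<pi> t)) x l = (\<Sum>i\<in>J. \<bar>h (\<pi> (x (Suc i))) - h (\<pi> (x i))\<bar>)"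
    unfolding chain_variation_def by (rule sum.mono_neutral_right) (auto simp: J_def)
  also have "\<dots> \<le> (\<Sum>i\<in>J. 2 * B)" by (rule sum_mono) (simp add: J_def jump)
  also have "\<dots> \<le> 2 * B * card V"
    using \<open>card J \<le> card V\<close> \<open>0 \<le> B\<close> by (simp add: mult_left_mono mult.commute)
  finally show "ereal (chain_variation (\<lambda>t. h (\<pi> t)) x l) \<le> ereal (2 * B * card V)" by simp
qed

lemma regulated_bounded:
  assumes "regulated h a b" "a \<le> b"
  shows "\<exists>B. \<forall>t\<in>{a..b}. \<bar>h t\<bar> \<le> B"
proof -
  obtain \<pi> V where \<pi>: "finite V" "\<pi> ` {a..b} \<subseteq> V" "\<forall>t\<in>{a..b}. \<bar>h t - h (\<pi> t)\<bar> \<le> 1"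
    using regulated_step_approx[OF assms zero_less_one] by blast
  have "\<bar>h t\<bar> \<le> Max ((\<lambda>v. \<bar>h v\<bar>) ` V) + 1" if t: "t \<in> {a..b}" for t
  proof -
    have "\<pi> t \<in> V" using \<pi>(2) t by (auto simp: image_subset_iff)
    then have "\<bar>h (\<pi> t)\<bar> \<le> Max ((\<lambda>v. \<bar>h v\<bar>) ` V)" using \<pi>(1) by (intro Max_ge) auto
    with \<pi>(3) t show ?thesis by fastforce
  qed
  then show ?thesis by blast
qed

lemma truncated_variation_regulated_finite:
  assumes "regulated h a b" "a \<le> b" "0 < \<delta>"
  shows "truncated_variation h a b \<delta> \<noteq> \<infinity>"
proof -
  obtain \<pi> V where \<pi>: "finite V" "\<pi> ` {a..b} \<subseteq> V"
    "\<forall>s t. a \<le> s \<longrightarrow> s \<le> t \<longrightarrow> t \<le> b \<longrightarrow> \<pi> s \<le> \<pi> t" "\<forall>t\<in>{a..b}. \<bar>h t - h (\<pi> t)\<bar> \<le> \<delta> / 2"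
    using regulated_step_approx[OF assms(1,2), of "\<delta> / 2"] \<open>0 < \<delta>\<close> by auto
  have "truncated_variation h a b \<delta> \<le> total_variation (\<lambda>t. h (\<pi> t)) a b"
    using \<pi>(4) by (rule truncated_variation_le_total_variation)
  also have "\<dots> \<le> ereal (2 * Max ((\<lambda>v. \<bar>h v\<bar>) ` V) * card V)"
    using \<pi>(1-3) by (intro total_variation_comp_monotone_le) auto
  finally show ?thesis by auto
qed

lemma finite_common_radius:
  fixes T :: "real set"
  assumes "finite T" "\<forall>p\<in>T. \<exists>r>0. \<forall>y. \<bar>y - p\<bar> \<le> r \<longrightarrow> P p y"
  shows "\<exists>r>0. \<forall>p\<in>T. \<forall>y. \<bar>y - p\<bar> \<le> r \<longrightarrow> P p y"
proof -
  obtain \<rho> where \<rho>: "\<forall>p\<in>T. \<rho> p > 0 \<and> (\<forall>y. \<bar>y - p\<bar> \<le> \<rho> p \<longrightarrow> P p y)"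
    using bchoice[OF assms(2)] by blast
  define r where "r = Min (insert 1 (\<rho> ` T))"
  have "0 < r" "\<forall>p\<in>T. r \<le> \<rho> p" using assms(1) \<rho> by (simp_all add: r_def)
  with \<rho> show ?thesis by (meson order_trans)
qed

lemma oscillation_dichotomy:
  fixes f g :: "real \<Rightarrow> real" and \<epsilon> \<tau> :: real
  assumes "a \<le> c" "d \<le> b"
    and gaps: "\<And>s t. a \<le> s \<Longrightarrow> s \<le> t \<Longrightarrow> t \<le> b \<Longrightarrow> {s..t} \<inter> T = {} \<Longrightarrow> \<bar>f s - f t\<bar> \<le> \<epsilon>"
    and near: "\<forall>p\<in>T \<inter> {c..d}. (\<forall>t\<in>{c..d}. \<bar>f t - f p\<bar> \<le> \<epsilon> / 2) \<or> (\<forall>t\<in>{c..d}. \<bar>g t - g p\<bar> \<le> \<tau> / 2)"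
  shows "(\<forall>s\<in>{c..d}. \<forall>t\<in>{c..d}. \<bar>f s - f t\<bar> \<le> \<epsilon>) \<or> truncated_variation g c d \<tau> = 0"
proof (cases "\<exists>p\<in>T \<inter> {c..d}. \<forall>t\<in>{c..d}. \<bar>g t - g p\<bar> \<le> \<tau> / 2")
  case True
  then show ?thesis by (auto simp: truncated_variation_eq_0_if_near_const)
next
  case False
  have osc: "\<bar>f s - f t\<bar> \<le> \<epsilon>" if "s \<in> {c..d}" "t \<in> {c..d}" "s \<le> t" for s t
  proof (cases "{s..t} \<inter> T = {}")
    case True
    with that assms(1,2) show ?thesis by (intro gaps) auto
  next
    case False
    then obtain p where "p \<in> T" "p \<in> {s..t}" by blast
    with that have "p \<in> T \<inter> {c..d}" by auto
    with \<open>\<not> (\<exists>p\<in>T \<inter> {c..d}. \<forall>t\<in>{c..d}. \<bar>g t - g p\<bar> \<le> \<tau> / 2)\<close> near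
    have "\<forall>t\<in>{c..d}. \<bar>f t - f p\<bar> \<le> \<epsilon> / 2" by blast
    with that have "\<bar>f s - f p\<bar> \<le> \<epsilon> / 2" "\<bar>f t - f p\<bar> \<le> \<epsilon> / 2" by auto
    then show ?thesis by linarith
  qed
  have "\<bar>f s - f t\<bar> \<le> \<epsilon>" if "s \<in> {c..d}" "t \<in> {c..d}" for s t
    using osc[OF that] osc[OF that(2,1)] by (cases "s \<le> t") (auto simp: abs_minus_commute)
  then show ?thesis by blast
qed

text \<open>Where the integrand is not uniformly small on a short interval, the interval contains a
  jump of the integrand, hence no jump of the integrator.\<close>
lemma short_intervals_dichotomy:
  assumes reg: "regulated f a b"
    and nc: "\<forall>t\<in>{a..b}. continuous (at t within {a..b}) f \<or> continuous (at t within {a..b}) g"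
    and "0 < \<epsilon>" "0 < \<tau>"
  shows "\<exists>\<delta>>0. \<forall>c d. a \<le> c \<longrightarrow> c \<le> d \<longrightarrow> d \<le> b \<longrightarrow> d - c < \<delta> \<longrightarrow>
    (\<forall>s\<in>{c..d}. \<forall>t\<in>{c..d}. \<bar>f s - f t\<bar> \<le> \<epsilon>) \<or> truncated_variation g c d \<tau> = 0"
proof -
  obtain T where T: "finite T" "T \<subseteq> {a..b}"
    "\<And>s t. a \<le> s \<Longrightarrow> s \<le> t \<Longrightarrow> t \<le> b \<Longrightarrow> {s..t} \<inter> T = {} \<Longrightarrow> \<bar>f s - f t\<bar> \<le> \<epsilon>"
    using regulated_finite_gaps[OF reg \<open>0 < \<epsilon>\<close>] by (elim exE conjE) auto
  define cont where "cont p \<longleftrightarrow> continuous (at p within {a..b}) f" for p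
  define P where "P p y \<longleftrightarrow> y \<in> {a..b} \<longrightarrow>
    (cont p \<longrightarrow> \<bar>f y - f p\<bar> \<le> \<epsilon> / 2) \<and> (\<not> cont p \<longrightarrow> \<bar>g y - g p\<bar> \<le> \<tau> / 2)" for p y
  have "\<exists>r>0. \<forall>y. \<bar>y - p\<bar> \<le> r \<longrightarrow> P p y" if "p \<in> T" for p
  proof (cases "cont p")
    case True
    from continuous_within_E[OF this[unfolded cont_def], of "\<epsilon> / 2"] \<open>0 < \<epsilon>\<close> True show ?thesis
      unfolding P_def dist_real_def by (metis half_gt_zero less_imp_le)
  next
    case False
    with nc T(2) that have "continuous (at p within {a..b}) g" by (auto simp: cont_def)
    from continuous_within_E[OF this, of "\<tau> / 2"] \<open>0 < \<tau>\<close> False show ?thesis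
      unfolding P_def dist_real_def by (metis half_gt_zero less_imp_le)
  qed
  then obtain \<delta> where "\<delta> > 0" and \<delta>: "\<forall>p\<in>T. \<forall>y. \<bar>y - p\<bar> \<le> \<delta> \<longrightarrow> P p y"
    using finite_common_radius[OF T(1)] by blast
  have "(\<forall>s\<in>{c..d}. \<forall>t\<in>{c..d}. \<bar>f s - f t\<bar> \<le> \<epsilon>) \<or> truncated_variation g c d \<tau> = 0"
    if cd: "a \<le> c" "c \<le> d" "d \<le> b" "d - c < \<delta>" for c d
  proof (rule oscillation_dichotomy[OF cd(1,3) T(3)])
    show "\<forall>p\<in>T \<inter> {c..d}. (\<forall>t\<in>{c..d}. \<bar>f t - f p\<bar> \<le> \<epsilon> / 2) \<or> (\<forall>t\<in>{c..d}. \<bar>g t - g p\<bar> \<le> \<tau> / 2)"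
    proof
      fix p assume p: "p \<in> T \<inter> {c..d}"
      have "P p t" if "t \<in> {c..d}" for t using \<delta> p that cd by auto
      with cd show "(\<forall>t\<in>{c..d}. \<bar>f t - f p\<bar> \<le> \<epsilon> / 2) \<or> (\<forall>t\<in>{c..d}. \<bar>g t - g p\<bar> \<le> \<tau> / 2)"
        by (cases "cont p") (auto simp: P_def)
    qed
  qed
  with \<open>0 < \<delta>\<close> show ?thesis by blast
qed

definition fine_partition :: "real \<Rightarrow> real \<Rightarrow> real \<Rightarrow> nat \<Rightarrow> (nat \<Rightarrow> real) \<Rightarrow> (nat \<Rightarrow> real) \<Rightarrow> bool" where
  "fine_partition \<delta> c d l x \<nu> \<longleftrightarrow> tagged_partition c d l x \<nu> \<and> (\<forall>i<l. x (Suc i) - x i < \<delta>)"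

definition local_error_bound ::
  "(real \<Rightarrow> real) \<Rightarrow> (real \<Rightarrow> real) \<Rightarrow> nat \<Rightarrow> (nat \<Rightarrow> real) \<Rightarrow> (nat \<Rightarrow> real) \<Rightarrow> bool" where
  "local_error_bound f g l x s \<longleftrightarrow> (\<forall>i<l. \<forall>L y \<mu>. tagged_partition (x i) (x (Suc i)) L y \<mu> \<longrightarrow>
     \<bar>RS_sum f g L y \<mu> - f (x i) * (g (x (Suc i)) - g (x i))\<bar> \<le> s i)"

lemma RS_has_integral_iff:
  "RS_has_integral f g a b I \<longleftrightarrow>
    (\<forall>\<epsilon>>0. \<exists>\<delta>>0. \<forall>l x \<nu>. fine_partition \<delta> a b l x \<nu> \<longrightarrow> \<bar>RS_sum f g l x \<nu> - I\<bar> < \<epsilon>)"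
  unfolding RS_has_integral_def fine_partition_def tagged_partition_def RS_sum_def
  by (simp add: all_conj_distrib imp_conjR conj_ac)

lemma tagged_partition_strict_mono:
  assumes "tagged_partition c d l x \<nu>"
  shows "strict_mono_on {..l} x"
proof (rule strict_mono_onI)
  fix i j assume "i \<in> {..l}" "j \<in> {..l}" "i < j"
  moreover have "\<forall>i<l. x i < x (Suc i)" using assms by (simp add: tagged_partition_def)
  ultimately have "x i < x (Suc i)" "x (Suc i) \<le> x j"
    using chain_mono[OF tagged_partition_mono[OF assms], of "Suc i" j] by auto
  then show "x i < x j" by simp
qed

lemma tagged_partition_segment:
  assumes "tagged_partition c d L y \<mu>" "p \<le> q" "q \<le> L"
  shows "tagged_partition (y p) (y q) (q - p) (\<lambda>k. y (p + k)) (\<lambda>k. \<mu> (p + k))"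
  using assms by (auto simp: tagged_partition_def)

lemma RS_sum_segment:
  "RS_sum f g n (\<lambda>k. y (m + k)) (\<lambda>k. \<mu> (m + k)) = (\<Sum>j\<in>{m..<m + n}. f (\<mu> j) * (g (y (Suc j)) - g (y j)))"
  by (induction n) (simp_all add: RS_sum_def)

lemma sum_lessThan_regroup:
  fixes \<phi> :: "nat \<Rightarrow> real"
  assumes "p 0 = 0" "\<forall>i<l. p i \<le> p (Suc i)"
  shows "(\<Sum>j<p l. \<phi> j) = (\<Sum>i<l. \<Sum>j\<in>{p i..<p (Suc i)}. \<phi> j)"
  using assms(2)
proof (induction l)
  case (Suc l)
  then have "(\<Sum>j<p (Suc l). \<phi> j) = (\<Sum>j\<in>{0..<p l}. \<phi> j) + (\<Sum>j\<in>{p l..<p (Suc l)}. \<phi> j)"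
    by (subst sum.atLeastLessThan_concat) (auto simp: atLeast0LessThan)
  with Suc show ?case by (simp add: atLeast0LessThan)
qed (simp add: assms(1))

lemma refinement_indices:
  assumes P: "tagged_partition a b l x \<nu>" and Q: "tagged_partition a b L y \<mu>"
    and sub: "x ` {..l} \<subseteq> y ` {..L}"
  obtains p where "p 0 = 0" "p l = L" "\<forall>i<l. p i < p (Suc i)" "\<forall>i\<le>l. p i \<le> L \<and> y (p i) = x i"
proof
  have inj: "inj_on y {..L}" by (rule strict_mono_on_imp_inj_on[OF tagged_partition_strict_mono[OF Q]])
  define p where "p i = the_inv_into {..L} y (x i)" for i
  have p: "p i \<le> L \<and> y (p i) = x i" if "i \<le> l" for i
    using the_inv_into_into[OF inj, of "x i" "{..L}"] f_the_inv_into_f[OF inj, of "x i"] sub that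
    by (auto simp: p_def)
  then show "\<forall>i\<le>l. p i \<le> L \<and> y (p i) = x i" by blast
  have "y (p 0) = y 0" "y (p l) = y L" using p[of 0] p[of l] P Q by (auto simp: tagged_partition_def)
  then show "p 0 = 0" "p l = L"
    using p[of 0] p[of l] inj_onD[OF inj] by auto
  show "\<forall>i<l. p i < p (Suc i)"
  proof (intro allI impI)
    fix i assume "i < l"
    then have "y (p i) < y (p (Suc i))" using p[of i] p[of "Suc i"] P by (simp add: tagged_partition_def)
    moreover have "p i \<in> {..L}" "p (Suc i) \<in> {..L}" using p[of i] p[of "Suc i"] \<open>i < l\<close> by auto
    ultimately show "p i < p (Suc i)"
      using strict_mono_on_less[OF tagged_partition_strict_mono[OF Q]] by blast
  qed
qed

lemma abs_RS_sum_refinement_le: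
  assumes P: "tagged_partition a b l x \<nu>" and Q: "tagged_partition a b L y \<mu>"
    and sub: "x ` {..l} \<subseteq> y ` {..L}" and s: "local_error_bound f g l x s"
  shows "\<bar>RS_sum f g l x \<nu> - RS_sum f g L y \<mu>\<bar> \<le> 2 * (\<Sum>i<l. s i)"
proof -
  obtain p where p: "p 0 = 0" "p l = L" "\<forall>i<l. p i < p (Suc i)" "\<forall>i\<le>l. p i \<le> L \<and> y (p i) = x i"
    using refinement_indices[OF P Q sub] by blast
  define seg where "seg i = RS_sum f g (p (Suc i) - p i) (\<lambda>k. y (p i + k)) (\<lambda>k. \<mu> (p i + k))" for i
  have "RS_sum f g L y \<mu> = (\<Sum>i<l. seg i)"
    unfolding seg_def RS_sum_segment RS_sum_def p(2)[symmetric]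
    using p(3) by (subst sum_lessThan_regroup[where p = p, OF p(1)]) (auto intro!: sum.cong simp: less_imp_le)
  moreover have "\<bar>f (\<nu> i) * (g (x (Suc i)) - g (x i)) - seg i\<bar> \<le> 2 * s i" if "i < l" for i
  proof -
    have "tagged_partition (x i) (x (Suc i)) (p (Suc i) - p i) (\<lambda>k. y (p i + k)) (\<lambda>k. \<mu> (p i + k))"
      using tagged_partition_segment[OF Q, of "p i" "p (Suc i)"] p(3,4) that
      by (simp add: less_imp_le)
    moreover have "tagged_partition (x i) (x (Suc i)) 1 (\<lambda>k. if k = 0 then x i else x (Suc i)) (\<lambda>_. \<nu> i)"
      using P that by (simp add: tagged_partition_def)
    ultimately have "\<bar>seg i - f (x i) * (g (x (Suc i)) - g (x i))\<bar> \<le> s i"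
      "\<bar>f (\<nu> i) * (g (x (Suc i)) - g (x i)) - f (x i) * (g (x (Suc i)) - g (x i))\<bar> \<le> s i"
      using s that unfolding local_error_bound_def seg_def by (force simp: RS_sum_def)+
    then show ?thesis by linarith
  qed
  then have "\<bar>RS_sum f g l x \<nu> - (\<Sum>i<l. seg i)\<bar> \<le> (\<Sum>i<l. 2 * s i)"
    unfolding RS_sum_def sum_subtractf[symmetric] by (intro order_trans[OF sum_abs] sum_mono) auto
  ultimately show ?thesis by (simp add: sum_distrib_left)
qed

lemma finite_set_partition:
  fixes Y :: "real set"
  assumes "finite Y" "Y \<subseteq> {a..b}" "a \<in> Y" "b \<in> Y"
  shows "\<exists>L y. tagged_partition a b L y y \<and> y ` {..L} = Y"
proof -
  define zs where "zs = sorted_list_of_set Y"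
  define L where "L = length zs - 1"
  define y where "y j = zs ! j" for j
  have set: "set zs = Y" and sorted: "sorted_wrt (<) zs" using assms(1) by (simp_all add: zs_def)
  then have len: "length zs = Suc L" using assms(3) by (cases zs) (auto simp: L_def)
  have y_less: "y i < y j" if "i < j" "j \<le> L" for i j
    using sorted_wrt_nth_less[OF sorted that(1)] that len by (simp add: y_def)
  have range: "y ` {..L} = Y"
    using len unfolding set[symmetric] set_conv_nth y_def by (auto simp: less_Suc_eq_le)
  have "y 0 = a"
  proof -
    obtain j where "j \<le> L" "y j = a" using assms(3) range by force
    moreover have "a \<le> y 0" using range assms(2) by force
    ultimately show ?thesis using y_less[of 0 j] by (cases "j = 0") auto
  qed
  moreover have "y L = b"
  proof -
    obtain j where "j \<le> L" "y j = b" using assms(4) range by force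
    moreover have "y L \<le> b" using range assms(2) by force
    ultimately show ?thesis using y_less[of j L] by (cases "j = L") auto
  qed
  moreover have "\<forall>i<L. y i < y (Suc i)" using y_less by simp
  ultimately have "tagged_partition a b L y y" by (simp add: tagged_partition_def less_imp_le)
  with range show ?thesis by blast
qed

lemma RS_sums_cauchy:
  assumes small: "\<And>\<epsilon>. 0 < \<epsilon> \<Longrightarrow> \<exists>\<delta>>0. \<forall>l x \<nu>. fine_partition \<delta> a b l x \<nu> \<longrightarrow>
      (\<exists>s. local_error_bound f g l x s \<and> (\<Sum>i<l. s i) \<le> \<epsilon>)"
    and "0 < \<epsilon>"
  shows "\<exists>\<delta>>0. \<forall>l x \<nu> l' x' \<nu>'. fine_partition \<delta> a b l x \<nu> \<longrightarrow> fine_partition \<delta> a b l' x' \<nu>' \<longrightarrow>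
    \<bar>RS_sum f g l x \<nu> - RS_sum f g l' x' \<nu>'\<bar> \<le> \<epsilon>"
proof -
  obtain \<delta> where "\<delta> > 0" and \<delta>: "\<forall>l x \<nu>. fine_partition \<delta> a b l x \<nu> \<longrightarrow>
      (\<exists>s. local_error_bound f g l x s \<and> (\<Sum>i<l. s i) \<le> \<epsilon> / 4)"
    using small[of "\<epsilon> / 4"] \<open>0 < \<epsilon>\<close> by auto
  have "\<bar>RS_sum f g l x \<nu> - RS_sum f g l' x' \<nu>'\<bar> \<le> \<epsilon>"
    if P: "fine_partition \<delta> a b l x \<nu>" and P': "fine_partition \<delta> a b l' x' \<nu>'" for l x \<nu> l' x' \<nu>'
  proof -
    obtain s s' where s: "local_error_bound f g l x s" "(\<Sum>i<l. s i) \<le> \<epsilon> / 4"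
      and s': "local_error_bound f g l' x' s'" "(\<Sum>i<l'. s' i) \<le> \<epsilon> / 4"
      using \<delta> P P' by blast
    have "tagged_partition a b l x \<nu>" "tagged_partition a b l' x' \<nu>'"
      using P P' by (simp_all add: fine_partition_def)
    moreover obtain L y where Q: "tagged_partition a b L y y" "y ` {..L} = x ` {..l} \<union> x' ` {..l'}"
    proof (rule finite_set_partition[THEN exE, of "x ` {..l} \<union> x' ` {..l'}" a b])
      show "x ` {..l} \<union> x' ` {..l'} \<subseteq> {a..b}"
        using calculation by (auto dest: tagged_partition_points)
      show "a \<in> x ` {..l} \<union> x' ` {..l'}" "b \<in> x ` {..l} \<union> x' ` {..l'}"
        using calculation(1) by (force simp: tagged_partition_def)+
    qed (use that in auto)
    ultimately have "\<bar>RS_sum f g l x \<nu> - RS_sum f g L y y\<bar> \<le> 2 * (\<Sum>i<l. s i)"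
      "\<bar>RS_sum f g l' x' \<nu>' - RS_sum f g L y y\<bar> \<le> 2 * (\<Sum>i<l'. s' i)"
      using s(1) s'(1) by (auto intro!: abs_RS_sum_refinement_le)
    with s(2) s'(2) show ?thesis by linarith
  qed
  with \<open>\<delta> > 0\<close> show ?thesis by blast
qed

lemma uniform_fine_partition:
  assumes "a < b" "0 < \<delta>"
  shows "\<exists>N. \<forall>n\<ge>N. fine_partition \<delta> a b (Suc n) (\<lambda>j. a + j * ((b - a) / Suc n)) (\<lambda>j. a + j * ((b - a) / Suc n))"
proof -
  obtain N :: nat where "(b - a) / \<delta> < N" using reals_Archimedean2 by blast
  then have "b - a < N * \<delta>" using assms by (simp add: pos_divide_less_eq)
  have "fine_partition \<delta> a b (Suc n) (\<lambda>j. a + j * ((b - a) / Suc n)) (\<lambda>j. a + j * ((b - a) / Suc n))"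
    if "N \<le> n" for n
  proof -
    define h where "h = (b - a) / Suc n"
    have "real N * \<delta> \<le> Suc n * \<delta>" using that assms by (intro mult_right_mono) auto
    with \<open>b - a < N * \<delta>\<close> have "h < \<delta>" by (simp add: h_def divide_less_eq mult.commute)
    moreover have "0 < h" "a + Suc n * h = b" using assms by (simp_all add: h_def)
    ultimately show ?thesis
      unfolding fine_partition_def tagged_partition_def h_def[symmetric] by (simp add: algebra_simps)
  qed
  then show ?thesis by blast
qed

lemma RS_has_integral_if_cauchy:
  assumes "a < b"
    and cauchy: "\<And>\<epsilon>. 0 < \<epsilon> \<Longrightarrow> \<exists>\<delta>>0. \<forall>l x \<nu> l' x' \<nu>'. fine_partition \<delta> a b l x \<nu> \<longrightarrow>
      fine_partition \<delta> a b l' x' \<nu>' \<longrightarrow> \<bar>RS_sum f g l x \<nu> - RS_sum f g l' x' \<nu>'\<bar> \<le> \<epsilon>"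
  shows "\<exists>I. RS_has_integral f g a b I"
proof -
  define u where "u n j = a + j * ((b - a) / Suc n)" for n :: nat and j :: nat
  define R where "R n = RS_sum f g (Suc n) (u n) (u n)" for n
  have fine_u: "\<exists>N. \<forall>n\<ge>N. fine_partition \<delta> a b (Suc n) (u n) (u n)" if "0 < \<delta>" for \<delta>
    unfolding u_def using uniform_fine_partition[OF \<open>a < b\<close> that] .
  have "Cauchy R"
  proof (rule CauchyI)
    fix e :: real assume "0 < e"
    then obtain \<delta> where "0 < \<delta>" and \<delta>: "\<forall>l x \<nu> l' x' \<nu>'. fine_partition \<delta> a b l x \<nu> \<longrightarrow>
        fine_partition \<delta> a b l' x' \<nu>' \<longrightarrow> \<bar>RS_sum f g l x \<nu> - RS_sum f g l' x' \<nu>'\<bar> \<le> e / 2"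
      using cauchy[of "e / 2"] by auto
    then obtain N where "\<forall>n\<ge>N. fine_partition \<delta> a b (Suc n) (u n) (u n)" using fine_u by blast
    with \<delta> \<open>0 < e\<close> have "\<forall>m\<ge>N. \<forall>n\<ge>N. norm (R m - R n) < e" by (fastforce simp: R_def)
    then show "\<exists>M. \<forall>m\<ge>M. \<forall>n\<ge>M. norm (R m - R n) < e" by blast
  qed
  then obtain I where I: "R \<longlonglongrightarrow> I" using Cauchy_convergent_iff convergent_def by blast
  have "RS_has_integral f g a b I" unfolding RS_has_integral_iff
  proof (intro allI impI)
    fix \<epsilon> :: real assume "0 < \<epsilon>"
    then obtain \<delta> where "0 < \<delta>" and \<delta>: "\<forall>l x \<nu> l' x' \<nu>'. fine_partition \<delta> a b l x \<nu> \<longrightarrow>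
        fine_partition \<delta> a b l' x' \<nu>' \<longrightarrow> \<bar>RS_sum f g l x \<nu> - RS_sum f g l' x' \<nu>'\<bar> \<le> \<epsilon> / 2"
      using cauchy[of "\<epsilon> / 2"] by auto
    obtain N where N: "\<forall>n\<ge>N. fine_partition \<delta> a b (Suc n) (u n) (u n)" using fine_u \<open>0 < \<delta>\<close> by blast
    have "\<forall>\<^sub>F n in sequentially. \<bar>R n - I\<bar> < \<epsilon> / 2"
      using I \<open>0 < \<epsilon>\<close> unfolding tendsto_iff dist_real_def by (meson half_gt_zero)
    then obtain N' where "\<forall>n\<ge>N'. \<bar>R n - I\<bar> < \<epsilon> / 2" unfolding eventually_sequentially by blast
    then have n: "\<bar>R (max N N') - I\<bar> < \<epsilon> / 2" "N \<le> max N N'" by simp_all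
    have "\<bar>RS_sum f g l x \<nu> - I\<bar> < \<epsilon>" if "fine_partition \<delta> a b l x \<nu>" for l x \<nu>
    proof -
      have "\<bar>RS_sum f g l x \<nu> - R (max N N')\<bar> \<le> \<epsilon> / 2" using \<delta> that N n(2) unfolding R_def by blast
      with n(1) show ?thesis by linarith
    qed
    with \<open>0 < \<delta>\<close> show "\<exists>\<delta>>0. \<forall>l x \<nu>. fine_partition \<delta> a b l x \<nu> \<longrightarrow> \<bar>RS_sum f g l x \<nu> - I\<bar> < \<epsilon>" by blast
  qed
  then show ?thesis ..
qed

lemma RS_has_integral_bound:
  assumes "a < b" and I: "RS_has_integral f g a b I"
    and bound: "\<And>l x \<nu>. tagged_partition a b l x \<nu> \<Longrightarrow> \<bar>RS_sum f g l x \<nu> - c\<bar> \<le> K"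
  shows "\<bar>I - c\<bar> \<le> K"
proof (rule field_le_epsilon)
  fix e :: real assume "0 < e"
  with I obtain \<delta> where "0 < \<delta>" and \<delta>: "\<forall>l x \<nu>. fine_partition \<delta> a b l x \<nu> \<longrightarrow> \<bar>RS_sum f g l x \<nu> - I\<bar> < e"
    unfolding RS_has_integral_iff by blast
  obtain N where "\<forall>n\<ge>N. fine_partition \<delta> a b (Suc n) (\<lambda>j. a + j * ((b - a) / Suc n)) (\<lambda>j. a + j * ((b - a) / Suc n))"
    using uniform_fine_partition[OF \<open>a < b\<close> \<open>0 < \<delta>\<close>] by blast
  then obtain l x \<nu> where "fine_partition \<delta> a b l x \<nu>" by blast
  with \<delta> bound[of l x \<nu>] show "\<bar>I - c\<bar> \<le> K + e" by (force simp: fine_partition_def)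
qed

lemma truncated_variation_series_nonneg:
  "0 \<le> M \<Longrightarrow> decreasing_to_zero \<eta> \<Longrightarrow> decreasing_to_zero \<theta> \<Longrightarrow>
    0 \<le> truncated_variation_series f g M \<eta> \<theta> c d"
  unfolding truncated_variation_series_def
  by (intro add_nonneg_nonneg suminf_0_le ereal_0_le_mult)
    (auto simp: truncated_variation_nonneg decreasing_to_zeroD split: nat.split)

lemma truncated_variation_series_split:
  assumes "decreasing_to_zero \<eta>" "0 \<le> M"
  shows "truncated_variation_series f g M \<eta> \<theta> c d =
    ereal M * truncated_variation g c d (\<theta> 0) + truncated_variation_series f g 0 \<eta> \<theta> c d"
proof -
  let ?T = "\<lambda>k. truncated_variation g c d (\<theta> k)"
  have "ereal (2 ^ k * case_nat M \<eta> k) * ?T k =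
      (if k = 0 then ereal M * ?T 0 else 0) + ereal (2 ^ k * case_nat 0 \<eta> k) * ?T k" for k
    by (cases k) (simp_all add: zero_ereal_def[symmetric])
  then have "(\<Sum>k. ereal (2 ^ k * case_nat M \<eta> k) * ?T k) =
      (\<Sum>k. if k = 0 then ereal M * ?T 0 else 0) + (\<Sum>k. ereal (2 ^ k * case_nat 0 \<eta> k) * ?T k)"
    using assms decreasing_to_zeroD(1)[OF assms(1)]
    by (simp only:) (rule suminf_add_ereal; auto simp: truncated_variation_nonneg split: nat.split)
  also have "(\<Sum>k. if k = 0 then ereal M * ?T 0 else 0) = ereal M * ?T 0"
    by (subst suminf_finite[of "{0}"]) auto
  finally show ?thesis by (simp add: truncated_variation_series_def add.assoc)
qed

lemma sum_suminf_truncated_variation_le: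
  assumes "\<forall>k. 0 \<le> c k" "\<forall>i<l. x i \<le> x (Suc i)"
  shows "(\<Sum>i<l. \<Sum>k. ereal (c k) * truncated_variation h (x i) (x (Suc i)) (\<delta> k)) \<le>
    (\<Sum>k. ereal (c k) * truncated_variation h (x 0) (x l) (\<delta> k))"
proof -
  have "(\<Sum>i<l. \<Sum>k. ereal (c k) * truncated_variation h (x i) (x (Suc i)) (\<delta> k)) =
      (\<Sum>k. \<Sum>i<l. ereal (c k) * truncated_variation h (x i) (x (Suc i)) (\<delta> k))"
    using assms(1) by (intro suminf_sum_ereal[symmetric]) (simp add: truncated_variation_nonneg)
  also have "\<dots> \<le> (\<Sum>k. ereal (c k) * truncated_variation h (x 0) (x l) (\<delta> k))"
  proof (rule suminf_le_pos)
    fix k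
    have "(\<Sum>i<l. ereal (c k) * truncated_variation h (x i) (x (Suc i)) (\<delta> k)) =
        ereal (c k) * (\<Sum>i<l. truncated_variation h (x i) (x (Suc i)) (\<delta> k))"
      by (rule sum_ereal_right_distrib[symmetric]) (simp add: truncated_variation_nonneg)
    also have "\<dots> \<le> ereal (c k) * truncated_variation h (x 0) (x l) (\<delta> k)"
      using assms by (intro ereal_mult_left_mono truncated_variation_partition_le) auto
    finally show "(\<Sum>i<l. ereal (c k) * truncated_variation h (x i) (x (Suc i)) (\<delta> k)) \<le> \<dots>" .
    show "0 \<le> (\<Sum>i<l. ereal (c k) * truncated_variation h (x i) (x (Suc i)) (\<delta> k))"
      using assms(1) by (intro sum_nonneg ereal_0_le_mult) (auto simp: truncated_variation_nonneg)
  qed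
  finally show ?thesis .
qed

lemma sum_truncated_variation_series_le:
  assumes P: "tagged_partition a b l x \<nu>" and \<eta>: "decreasing_to_zero \<eta>" and \<theta>: "decreasing_to_zero \<theta>"
    and M: "\<forall>i<l. 0 \<le> M i" "0 \<le> \<epsilon>"
    and small: "\<forall>i<l. M i \<le> \<epsilon> \<or> truncated_variation g (x i) (x (Suc i)) (\<theta> 0) = 0"
  shows "(\<Sum>i<l. truncated_variation_series f g (M i) \<eta> \<theta> (x i) (x (Suc i))) \<le>
    ereal \<epsilon> * truncated_variation g a b (\<theta> 0) + truncated_variation_series f g 0 \<eta> \<theta> a b"
proof -
  have mono: "\<forall>i<l. x i \<le> x (Suc i)" and ends: "x 0 = a" "x l = b"
    using P by (auto simp: tagged_partition_def less_imp_le)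
  have "(\<Sum>i<l. ereal (M i) * truncated_variation g (x i) (x (Suc i)) (\<theta> 0)) \<le>
      (\<Sum>i<l. ereal \<epsilon> * truncated_variation g (x i) (x (Suc i)) (\<theta> 0))"
  proof (rule sum_mono)
    fix i assume "i \<in> {..<l}"
    with small consider "M i \<le> \<epsilon>" | "truncated_variation g (x i) (x (Suc i)) (\<theta> 0) = 0" by auto
    then show "ereal (M i) * truncated_variation g (x i) (x (Suc i)) (\<theta> 0) \<le>
        ereal \<epsilon> * truncated_variation g (x i) (x (Suc i)) (\<theta> 0)"
      by cases (auto intro: ereal_mult_right_mono simp: truncated_variation_nonneg)
  qed
  also have "\<dots> = ereal \<epsilon> * (\<Sum>i<l. truncated_variation g (x i) (x (Suc i)) (\<theta> 0))"
    by (rule sum_ereal_right_distrib[symmetric]) (simp add: truncated_variation_nonneg)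
  also have "\<dots> \<le> ereal \<epsilon> * truncated_variation g a b (\<theta> 0)"
    using truncated_variation_partition_le[OF mono] ends M(2) by (intro ereal_mult_left_mono) auto
  finally have first: "(\<Sum>i<l. ereal (M i) * truncated_variation g (x i) (x (Suc i)) (\<theta> 0)) \<le>
      ereal \<epsilon> * truncated_variation g a b (\<theta> 0)" .
  moreover have "(\<Sum>i<l. truncated_variation_series f g 0 \<eta> \<theta> (x i) (x (Suc i))) \<le>
      truncated_variation_series f g 0 \<eta> \<theta> a b"
    unfolding truncated_variation_series_def sum.distrib ends[symmetric] using decreasing_to_zeroD[OF \<eta>]
      decreasing_to_zeroD[OF \<theta>]
    by (intro add_mono sum_suminf_truncated_variation_le mono) (auto split: nat.split)
  moreover have "(\<Sum>i<l. truncated_variation_series f g (M i) \<eta> \<theta> (x i) (x (Suc i))) =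
      (\<Sum>i<l. ereal (M i) * truncated_variation g (x i) (x (Suc i)) (\<theta> 0)) +
      (\<Sum>i<l. truncated_variation_series f g 0 \<eta> \<theta> (x i) (x (Suc i)))"
    unfolding sum.distrib[symmetric]
    using M(1) by (intro sum.cong refl truncated_variation_series_split[OF \<eta>]) auto
  ultimately show ?thesis by (simp add: add_mono)
qed

lemma exists_local_error_bound:
  assumes P: "tagged_partition a b l x \<nu>" and M: "\<forall>t\<in>{a..b}. \<bar>f t - f a\<bar> \<le> M"
    and \<eta>: "decreasing_to_zero \<eta>" and \<theta>: "decreasing_to_zero \<theta>" and "0 \<le> \<epsilon>"
    and dichotomy: "\<forall>i<l. (\<forall>s\<in>{x i..x (Suc i)}. \<forall>t\<in>{x i..x (Suc i)}. \<bar>f s - f t\<bar> \<le> \<epsilon>) \<or>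
      truncated_variation g (x i) (x (Suc i)) (\<theta> 0) = 0"
    and finite: "ereal \<epsilon> * truncated_variation g a b (\<theta> 0) + truncated_variation_series f g 0 \<eta> \<theta> a b \<noteq> \<infinity>"
  shows "\<exists>s. local_error_bound f g l x s \<and>
    ereal (\<Sum>i<l. s i) \<le> ereal \<epsilon> * truncated_variation g a b (\<theta> 0) + truncated_variation_series f g 0 \<eta> \<theta> a b"
proof -
  define good where "good i \<longleftrightarrow> (\<forall>s\<in>{x i..x (Suc i)}. \<forall>t\<in>{x i..x (Suc i)}. \<bar>f s - f t\<bar> \<le> \<epsilon>)" for i
  define Mi where "Mi i = (if good i then \<epsilon> else 2 * M)" for i
  define S where "S i = truncated_variation_series f g (Mi i) \<eta> \<theta> (x i) (x (Suc i))" for i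
  have "a \<le> b" by (rule tagged_partition_le[OF P])
  then have "0 \<le> M" using M by (metis abs_ge_zero atLeastAtMost_iff order_refl order_trans)
  have points: "x i \<in> {a..b}" "x (Suc i) \<in> {a..b}" "x i \<le> x (Suc i)" if "i < l" for i
    using tagged_partition_points[OF P, of i] tagged_partition_points[OF P, of "Suc i"] that
      tagged_partition_mono[OF P] by auto
  have osc: "\<forall>t\<in>{x i..x (Suc i)}. \<bar>f t - f (x i)\<bar> \<le> Mi i" if "i < l" for i
  proof (cases "good i")
    case True
    with points[OF that] show ?thesis by (auto simp: Mi_def good_def)
  next
    case False
    have "\<bar>f t - f a\<bar> \<le> M" "\<bar>f (x i) - f a\<bar> \<le> M" if "t \<in> {x i..x (Suc i)}" for t
      using M points[OF \<open>i < l\<close>] that by auto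
    with False show ?thesis by (fastforce simp: Mi_def)
  qed
  have Mi: "0 \<le> Mi i" for i using \<open>0 \<le> \<epsilon>\<close> \<open>0 \<le> M\<close> by (simp add: Mi_def)
  have sum_S: "(\<Sum>i<l. S i) \<le> ereal \<epsilon> * truncated_variation g a b (\<theta> 0) + truncated_variation_series f g 0 \<eta> \<theta> a b"
    unfolding S_def using dichotomy Mi \<open>0 \<le> \<epsilon>\<close>
    by (intro sum_truncated_variation_series_le[OF P \<eta> \<theta>]) (auto simp: Mi_def good_def)
  have S: "0 \<le> S i" for i
    unfolding S_def by (rule truncated_variation_series_nonneg[OF Mi \<eta> \<theta>])
  have S_finite: "S i \<noteq> \<infinity>" if "i < l" for i
  proof
    assume "S i = \<infinity>"
    with that have "(\<Sum>i<l. S i) = \<infinity>" by (auto simp: sum_Pinfty)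
    with sum_S finite show False by simp
  qed
  define s where "s i = real_of_ereal (S i)" for i
  have Ss: "S i = ereal (s i)" if "i < l" for i
    using S_finite[OF that] S[of i] by (simp add: s_def ereal_real')
  have "local_error_bound f g l x s"
    unfolding local_error_bound_def
  proof (intro allI impI)
    fix i L y \<mu> assume "i < l" "tagged_partition (x i) (x (Suc i)) L y \<mu>"
    from RS_sum_deviation_le_series[where g = g, OF this(2) osc[OF \<open>i < l\<close>] \<eta> \<theta>]
    show "\<bar>RS_sum f g L y \<mu> - f (x i) * (g (x (Suc i)) - g (x i))\<bar> \<le> s i"
      using Ss[OF \<open>i < l\<close>] by (simp add: S_def)
  qed
  moreover have "ereal (\<Sum>i<l. s i) = (\<Sum>i<l. S i)" using Ss by simp
  ultimately show ?thesis using sum_S by auto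
qed

lemma local_errors_small:
  assumes reg_f: "regulated f a b" and reg_g: "regulated g a b" and "a \<le> b"
    and nc: "\<forall>t\<in>{a..b}. continuous (at t within {a..b}) f \<or> continuous (at t within {a..b}) g"
    and M: "\<forall>t\<in>{a..b}. \<bar>f t - f a\<bar> \<le> M"
    and \<eta>: "decreasing_to_zero \<eta>" and \<theta>: "decreasing_to_zero \<theta>" and "0 < \<theta> 0"
    and series: "truncated_variation_series f g 0 \<eta> \<theta> a b < ereal (\<epsilon> / 2)"
  shows "\<exists>\<delta>>0. \<forall>l x \<nu>. fine_partition \<delta> a b l x \<nu> \<longrightarrow> (\<exists>s. local_error_bound f g l x s \<and> (\<Sum>i<l. s i) \<le> \<epsilon>)"
proof -
  obtain T where T: "truncated_variation g a b (\<theta> 0) = ereal T" "0 \<le> T"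
    using truncated_variation_regulated_finite[OF reg_g \<open>a \<le> b\<close> \<open>0 < \<theta> 0\<close>]
      truncated_variation_nonneg[of g a b "\<theta> 0"] by (cases "truncated_variation g a b (\<theta> 0)") auto
  obtain S0 where S0: "truncated_variation_series f g 0 \<eta> \<theta> a b = ereal S0" "0 \<le> S0"
    using truncated_variation_series_nonneg[OF order_refl \<eta> \<theta>, of f g a b] series
    by (cases "truncated_variation_series f g 0 \<eta> \<theta> a b") auto
  with series have "0 < \<epsilon>" "S0 < \<epsilon> / 2" by auto
  define \<epsilon>0 where "\<epsilon>0 = \<epsilon> / (2 * (T + 1))"
  have "0 < \<epsilon>0" using \<open>0 < \<epsilon>\<close> T(2) by (simp add: \<epsilon>0_def)
  have "\<epsilon>0 * T \<le> \<epsilon> / 2"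
    using \<open>0 < \<epsilon>\<close> T(2) by (simp add: \<epsilon>0_def field_simps)
  with \<open>S0 < \<epsilon> / 2\<close> have total: "ereal \<epsilon>0 * truncated_variation g a b (\<theta> 0) +
      truncated_variation_series f g 0 \<eta> \<theta> a b < ereal \<epsilon>"
    by (simp add: T(1) S0(1))
  obtain \<delta> where "\<delta> > 0" and \<delta>: "\<forall>c d. a \<le> c \<longrightarrow> c \<le> d \<longrightarrow> d \<le> b \<longrightarrow> d - c < \<delta> \<longrightarrow>
      (\<forall>s\<in>{c..d}. \<forall>t\<in>{c..d}. \<bar>f s - f t\<bar> \<le> \<epsilon>0) \<or> truncated_variation g c d (\<theta> 0) = 0"
    using short_intervals_dichotomy[OF reg_f nc \<open>0 < \<epsilon>0\<close> \<open>0 < \<theta> 0\<close>] by blast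
  have "\<exists>s. local_error_bound f g l x s \<and> (\<Sum>i<l. s i) \<le> \<epsilon>" if P: "fine_partition \<delta> a b l x \<nu>" for l x \<nu>
  proof -
    have P': "tagged_partition a b l x \<nu>" using P by (simp add: fine_partition_def)
    have dichotomy: "\<forall>i<l. (\<forall>s\<in>{x i..x (Suc i)}. \<forall>t\<in>{x i..x (Suc i)}. \<bar>f s - f t\<bar> \<le> \<epsilon>0) \<or>
        truncated_variation g (x i) (x (Suc i)) (\<theta> 0) = 0"
      using \<delta> P tagged_partition_points[OF P'] tagged_partition_mono[OF P']
      by (simp add: fine_partition_def)
    obtain s where "local_error_bound f g l x s" and s: "ereal (\<Sum>i<l. s i) \<le>
        ereal \<epsilon>0 * truncated_variation g a b (\<theta> 0) + truncated_variation_series f g 0 \<eta> \<theta> a b"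
    proof -
      have "ereal \<epsilon>0 * truncated_variation g a b (\<theta> 0) + truncated_variation_series f g 0 \<eta> \<theta> a b \<noteq> \<infinity>"
        using total by auto
      from exists_local_error_bound[OF P' M \<eta> \<theta> less_imp_le[OF \<open>0 < \<epsilon>0\<close>] dichotomy this]
      show thesis using that by blast
    qed
    moreover have "(\<Sum>i<l. s i) < \<epsilon>" using order_le_less_trans[OF s total] by simp
    ultimately show ?thesis by (auto intro: less_imp_le)
  qed
  with \<open>\<delta> > 0\<close> show ?thesis by blast
qed

lemma decreasing_to_zero_single_level:
  assumes "0 \<le> e"
  shows "decreasing_to_zero (\<lambda>k. if k = 0 then e else 0)"
proof -
  have "(\<lambda>k. if k = 0 then e else 0 :: real) \<longlonglongrightarrow> 0"
    by (rule tendsto_eventually) (auto simp: eventually_sequentially intro: exI[of _ 1])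
  with assms show ?thesis
    by (auto simp: decreasing_to_zero_def antimono_def monotone_on_def)
qed

lemma truncated_variation_series_single_level:
  assumes "0 \<le> e" "0 \<le> \<tau>"
  shows "truncated_variation_series f g 0 (\<lambda>k. if k = 0 then e else 0) (\<lambda>k. if k = 0 then \<tau> else 0) c d =
    ereal (2 * e) * total_variation g c d + ereal \<tau> * truncated_variation f c d e"
proof -
  have "(\<Sum>k. ereal (2 ^ k * case_nat 0 (\<lambda>k. if k = 0 then e else 0) k) *
      truncated_variation g c d (if k = 0 then \<tau> else 0)) = ereal (2 * e) * total_variation g c d"
    by (subst suminf_finite[of "{1}"])
      (auto simp: truncated_variation_zero zero_ereal_def[symmetric] split: nat.split)
  moreover have "(\<Sum>k. ereal (2 ^ k * (if k = 0 then \<tau> else 0)) *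
      truncated_variation f c d (if k = 0 then e else 0)) = ereal \<tau> * truncated_variation f c d e"
    by (subst suminf_finite[of "{0}"]) (auto simp: zero_ereal_def[symmetric])
  ultimately show ?thesis by (simp add: truncated_variation_series_def)
qed

text \<open>If one of the two functions has bounded variation, a single truncation level suffices.\<close>
lemma small_series_if_bounded_variation:
  assumes reg_f: "regulated f a b" and "a \<le> b" and "0 < \<epsilon>"
    and bv: "total_variation f a b \<noteq> \<infinity> \<or> total_variation g a b \<noteq> \<infinity>"
  shows "\<exists>\<eta> \<theta>. decreasing_to_zero \<eta> \<and> decreasing_to_zero \<theta> \<and> 0 < \<theta> 0 \<and>
    truncated_variation_series f g 0 \<eta> \<theta> a b < ereal \<epsilon>"
proof -
  obtain e where e: "0 \<le> e" "ereal (2 * e) * total_variation g a b < ereal (\<epsilon> / 2)"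
    "truncated_variation f a b e \<noteq> \<infinity>"
  proof (cases "total_variation f a b = \<infinity>")
    case True
    with bv obtain G where G: "total_variation g a b = ereal G" "0 \<le> G"
      using total_variation_nonneg[of g a b] by (cases "total_variation g a b") auto
    define e where "e = \<epsilon> / (4 * (G + 1))"
    have "0 < e" "2 * e * G < \<epsilon> / 2" using \<open>0 < \<epsilon>\<close> G(2) by (simp_all add: e_def field_simps)
    with G(1) truncated_variation_regulated_finite[OF reg_f \<open>a \<le> b\<close> \<open>0 < e\<close>] show thesis
      by (intro that[of e]) auto
  next
    case False
    with \<open>0 < \<epsilon>\<close> show thesis
      by (intro that[of 0]) (simp_all add: truncated_variation_zero zero_ereal_def[symmetric])
  qed
  obtain F where F: "truncated_variation f a b e = ereal F" "0 \<le> F"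
    using e(3) truncated_variation_nonneg[of f a b e] by (cases "truncated_variation f a b e") auto
  define \<tau> where "\<tau> = \<epsilon> / (2 * (F + 1))"
  have "0 < \<tau>" "\<tau> * F < \<epsilon> / 2" using \<open>0 < \<epsilon>\<close> F(2) by (simp_all add: \<tau>_def field_simps)
  then have "truncated_variation_series f g 0 (\<lambda>k. if k = 0 then e else 0) (\<lambda>k. if k = 0 then \<tau> else 0) a b
      < ereal \<epsilon>"
    using ereal_add_strict_mono2[OF e(2), of "ereal (\<tau> * F)" "ereal (\<epsilon> / 2)"] F(1) \<open>0 \<le> e\<close>
      \<open>0 < \<tau>\<close>
    by (subst truncated_variation_series_single_level) auto
  moreover have "decreasing_to_zero (\<lambda>k. if k = 0 then e else 0)" "decreasing_to_zero (\<lambda>k. if k = 0 then \<tau> else 0)"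
    using \<open>0 < \<tau>\<close> \<open>0 \<le> e\<close> by (simp_all add: decreasing_to_zero_single_level)
  ultimately show ?thesis using \<open>0 < \<tau>\<close> by fastforce
qed

lemma truncated_variation_series_termsD:
  assumes "truncated_variation_series f g M \<eta> \<theta> c d \<noteq> \<infinity>" "0 \<le> M"
    and \<eta>: "decreasing_to_zero \<eta>" and \<theta>: "decreasing_to_zero \<theta>"
  shows "ereal (2 ^ k * case_nat M \<eta> k) * truncated_variation g c d (\<theta> k) \<noteq> \<infinity>"
    "ereal (2 ^ k * \<theta> k) * truncated_variation f c d (\<eta> k) \<noteq> \<infinity>"
proof -
  have g: "0 \<le> ereal (2 ^ k * case_nat M \<eta> k) * truncated_variation g c d (\<theta> k)" for k
    using \<open>0 \<le> M\<close> decreasing_to_zeroD(1)[OF \<eta>]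
    by (auto simp: truncated_variation_nonneg split: nat.split)
  have f: "0 \<le> ereal (2 ^ k * \<theta> k) * truncated_variation f c d (\<eta> k)" for k
    using decreasing_to_zeroD(1)[OF \<theta>] by (simp add: truncated_variation_nonneg)
  have "(\<Sum>k. ereal (2 ^ k * case_nat M \<eta> k) * truncated_variation g c d (\<theta> k)) \<noteq> \<infinity>"
    "(\<Sum>k. ereal (2 ^ k * \<theta> k) * truncated_variation f c d (\<eta> k)) \<noteq> \<infinity>"
    using assms(1) suminf_0_le[OF g] suminf_0_le[OF f] by (auto simp: truncated_variation_series_def)
  from suminf_PInfty[OF g this(1)] suminf_PInfty[OF f this(2)]
  show "ereal (2 ^ k * case_nat M \<eta> k) * truncated_variation g c d (\<theta> k) \<noteq> \<infinity>"
    "ereal (2 ^ k * \<theta> k) * truncated_variation f c d (\<eta> k) \<noteq> \<infinity>" .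
qed

text \<open>If both functions have unbounded variation, a finite series forces every \<open>\<theta> k\<close> to be
  positive: a vanishing \<open>\<theta> k\<close> forces \<open>\<eta>\<^sub>k\<^sub>-\<^sub>1 = 0\<close>, which in turn forces
  \<open>\<theta>\<^sub>k\<^sub>-\<^sub>1 = 0\<close>, and so on down to \<open>M = 0\<close>.\<close>
lemma truncation_levels_positive:
  assumes S: "truncated_variation_series f g M \<eta> \<theta> a b \<noteq> \<infinity>" and "0 < M"
    and \<eta>: "decreasing_to_zero \<eta>" and \<theta>: "decreasing_to_zero \<theta>"
    and "total_variation f a b = \<infinity>" "total_variation g a b = \<infinity>"
  shows "0 < \<theta> k"
proof (induction k)
  note terms = truncated_variation_series_termsD[OF S less_imp_le[OF \<open>0 < M\<close>] \<eta> \<theta>]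
  note nonneg = decreasing_to_zeroD(1)[OF \<eta>] decreasing_to_zeroD(1)[OF \<theta>]
  case 0
  show ?case
    using terms(1)[of 0] \<open>0 < M\<close> nonneg(2)[of 0] assms(6)
    by (cases "\<theta> 0 = 0") (auto simp: truncated_variation_zero)
  case (Suc k)
  show ?case
  proof (rule ccontr)
    assume "\<not> 0 < \<theta> (Suc k)"
    with nonneg(2)[of "Suc k"] have "\<theta> (Suc k) = 0" by simp
    with terms(1)[of "Suc k"] assms(6) nonneg(1)[of k] have "\<eta> k = 0"
      by (cases "\<eta> k = 0") (auto simp: truncated_variation_zero)
    with terms(2)[of k] assms(5) Suc.IH show False by (auto simp: truncated_variation_zero)
  qed
qed

lemma ereal_series_tail_small:
  fixes a :: "nat \<Rightarrow> ereal"
  assumes "\<And>k. 0 \<le> a k" "suminf a \<noteq> \<infinity>" "0 < r"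
  shows "\<exists>N. \<forall>n\<ge>N. (\<Sum>k. a (k + n)) < ereal r"
proof -
  obtain b where b: "a = (\<lambda>k. ereal (b k))" using suminf_PInfty_fun[OF assms(1,2)] by blast
  with assms(1) have "0 \<le> b k" for k by simp
  with assms(2) have "summable b" unfolding b by (intro summable_ereal) auto
  then obtain N where "\<forall>n\<ge>N. norm (\<Sum>k. b (k + n)) < r" using suminf_exist_split[OF assms(3)] by blast
  moreover have "(\<Sum>k. a (k + n)) = ereal (\<Sum>k. b (k + n))" for n
    unfolding b using summable_ignore_initial_segment[OF \<open>summable b\<close>] by (rule suminf_ereal')
  ultimately have "\<forall>n\<ge>N. (\<Sum>k. a (k + n)) < ereal r" by (simp add: abs_less_iff)
  then show ?thesis by blast
qed

text \<open>Shifting both sequences by \<open>N\<close> bounds the series by the tails of the two series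
  defining \<open>S\<close>.\<close>
lemma small_series_if_levels_positive:
  assumes S: "truncated_variation_series f g M \<eta> \<theta> a b \<noteq> \<infinity>" and "0 \<le> M"
    and \<eta>: "decreasing_to_zero \<eta>" and \<theta>: "decreasing_to_zero \<theta>" and pos: "\<forall>k. 0 < \<theta> k" and "0 < \<epsilon>"
  shows "\<exists>\<eta> \<theta>. decreasing_to_zero \<eta> \<and> decreasing_to_zero \<theta> \<and> 0 < \<theta> 0 \<and>
    truncated_variation_series f g 0 \<eta> \<theta> a b < ereal \<epsilon>"
proof -
  define A where "A k = ereal (2 ^ k * case_nat M \<eta> k) * truncated_variation g a b (\<theta> k)" for k
  define B where "B k = ereal (2 ^ k * \<theta> k) * truncated_variation f a b (\<eta> k)" for k
  note nonneg = decreasing_to_zeroD(1)[OF \<eta>] decreasing_to_zeroD(1)[OF \<theta>]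
  have A: "0 \<le> A k" and B: "0 \<le> B k" for k
    using \<open>0 \<le> M\<close> nonneg by (auto simp: A_def B_def truncated_variation_nonneg split: nat.split)
  have "suminf A + suminf B \<noteq> \<infinity>"
    using S unfolding truncated_variation_series_def A_def B_def .
  with suminf_0_le[OF A] suminf_0_le[OF B] have "suminf A \<noteq> \<infinity>" "suminf B \<noteq> \<infinity>" by auto
  then obtain NA NB where NA: "\<forall>n\<ge>NA. (\<Sum>k. A (k + n)) < ereal (\<epsilon> / 2)"
    and NB: "\<forall>n\<ge>NB. (\<Sum>k. B (k + n)) < ereal (\<epsilon> / 2)"
    using ereal_series_tail_small[OF A] ereal_series_tail_small[OF B] \<open>0 < \<epsilon>\<close> by (meson half_gt_zero)
  define N where "N = max NA NB"
  have g_tail: "(\<Sum>k. ereal (2 ^ k * case_nat 0 (\<lambda>k. \<eta> (k + N)) k) * truncated_variation g a b (\<theta> (k + N))) \<le>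
      (\<Sum>k. A (k + N))"
  proof (rule suminf_le_pos)
    fix k
    have "2 ^ k * case_nat 0 (\<lambda>k. \<eta> (k + N)) k \<le> 2 ^ (k + N) * case_nat M \<eta> (k + N)"
    proof (cases k)
      case (Suc j)
      have "(2::real) ^ Suc j \<le> 2 ^ (Suc j + N)" by (rule power_increasing) auto
      with Suc nonneg(1) show ?thesis by (simp add: mult_right_mono)
    qed (use \<open>0 \<le> M\<close> nonneg in \<open>auto split: nat.split\<close>)
    then show "ereal (2 ^ k * case_nat 0 (\<lambda>k. \<eta> (k + N)) k) * truncated_variation g a b (\<theta> (k + N)) \<le> A (k + N)"
      unfolding A_def by (intro ereal_mult_right_mono) (auto simp: truncated_variation_nonneg)
  qed (use nonneg in \<open>auto simp: truncated_variation_nonneg split: nat.split\<close>)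
  have f_tail: "(\<Sum>k. ereal (2 ^ k * \<theta> (k + N)) * truncated_variation f a b (\<eta> (k + N))) \<le> (\<Sum>k. B (k + N))"
  proof (rule suminf_le_pos)
    fix k
    have "(2::real) ^ k \<le> 2 ^ (k + N)" by (rule power_increasing) auto
    with nonneg(2) show "ereal (2 ^ k * \<theta> (k + N)) * truncated_variation f a b (\<eta> (k + N)) \<le> B (k + N)"
      unfolding B_def by (intro ereal_mult_right_mono) (auto simp: truncated_variation_nonneg mult_right_mono)
  qed (use nonneg in \<open>simp add: truncated_variation_nonneg\<close>)
  have "(\<Sum>k. A (k + N)) < ereal (\<epsilon> / 2)" "(\<Sum>k. B (k + N)) < ereal (\<epsilon> / 2)"
    using NA NB by (simp_all add: N_def)
  from ereal_add_strict_mono2[OF le_less_trans[OF g_tail this(1)] le_less_trans[OF f_tail this(2)]]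
  have "truncated_variation_series f g 0 (\<lambda>k. \<eta> (k + N)) (\<lambda>k. \<theta> (k + N)) a b < ereal \<epsilon>"
    unfolding truncated_variation_series_def by simp
  with pos show ?thesis by (blast intro: decreasing_to_zero_shift[OF \<eta>] decreasing_to_zero_shift[OF \<theta>])
qed

lemma small_series_exists:
  assumes reg_f: "regulated f a b" and "a \<le> b" and M: "\<forall>t\<in>{a..b}. \<bar>f t - f a\<bar> \<le> M"
    and \<eta>: "decreasing_to_zero \<eta>" and \<theta>: "decreasing_to_zero \<theta>"
    and S: "truncated_variation_series f g M \<eta> \<theta> a b \<noteq> \<infinity>" and "0 < \<epsilon>"
  shows "\<exists>\<eta> \<theta>. decreasing_to_zero \<eta> \<and> decreasing_to_zero \<theta> \<and> 0 < \<theta> 0 \<and>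
    truncated_variation_series f g 0 \<eta> \<theta> a b < ereal \<epsilon>"
proof (cases "total_variation f a b \<noteq> \<infinity> \<or> total_variation g a b \<noteq> \<infinity>")
  case True
  then show ?thesis by (rule small_series_if_bounded_variation[OF reg_f \<open>a \<le> b\<close> \<open>0 < \<epsilon>\<close>])
next
  case False
  have "0 < M"
  proof (rule ccontr)
    assume "\<not> 0 < M"
    with M have const: "f t = f a" if "t \<in> {a..b}" for t using that by fastforce
    have "total_variation f a b = total_variation (\<lambda>_. f a) a b"
      by (rule total_variation_cong) (rule const)
    then have "total_variation f a b = 0" by (simp add: total_variation_const)
    with False show False by simp
  qed
  with False have "\<forall>k. 0 < \<theta> k" using truncation_levels_positive[OF S _ \<eta> \<theta>] by blast
  with \<open>0 < M\<close> show ?thesis using small_series_if_levels_positive[OF S _ \<eta> \<theta> _ \<open>0 < \<epsilon>\<close>] by simp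
qed

lemma local_errors_small_if_series_finite:
  assumes reg_f: "regulated f a b" and reg_g: "regulated g a b" and "a \<le> b"
    and nc: "\<forall>t\<in>{a..b}. continuous (at t within {a..b}) f \<or> continuous (at t within {a..b}) g"
    and M: "\<forall>t\<in>{a..b}. \<bar>f t - f a\<bar> \<le> M"
    and \<eta>: "decreasing_to_zero \<eta>" and \<theta>: "decreasing_to_zero \<theta>"
    and S: "truncated_variation_series f g M \<eta> \<theta> a b \<noteq> \<infinity>" and "0 < \<epsilon>"
  shows "\<exists>\<delta>>0. \<forall>l x \<nu>. fine_partition \<delta> a b l x \<nu> \<longrightarrow> (\<exists>s. local_error_bound f g l x s \<and> (\<Sum>i<l. s i) \<le> \<epsilon>)"
proof -
  obtain \<eta>' \<theta>' where "decreasing_to_zero \<eta>'" "decreasing_to_zero \<theta>'" "0 < \<theta>' 0"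
    "truncated_variation_series f g 0 \<eta>' \<theta>' a b < ereal (\<epsilon> / 2)"
    using small_series_exists[OF reg_f \<open>a \<le> b\<close> M \<eta> \<theta> S, of "\<epsilon> / 2"] \<open>0 < \<epsilon>\<close> by auto
  from local_errors_small[OF reg_f reg_g \<open>a \<le> b\<close> nc M this] show ?thesis .
qed

lemma regulated_oscillation_le_SUP:
  assumes "regulated f a b" "a \<le> b"
  shows "\<forall>t\<in>{a..b}. \<bar>f t - f a\<bar> \<le> (SUP t\<in>{a..b}. \<bar>f t - f a\<bar>)"
proof -
  obtain B where B: "\<forall>t\<in>{a..b}. \<bar>f t\<bar> \<le> B" using regulated_bounded[OF assms] by blast
  have "\<bar>f t - f a\<bar> \<le> 2 * B" if "t \<in> {a..b}" for t
  proof -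
    have "\<bar>f t\<bar> \<le> B" "\<bar>f a\<bar> \<le> B" using B that assms(2) by auto
    then show ?thesis by linarith
  qed
  then have "bdd_above ((\<lambda>t. \<bar>f t - f a\<bar>) ` {a..b})" by (intro bdd_aboveI2)
  then show ?thesis by (auto intro: cSUP_upper)
qed

theorem theorem1:
  fixes f g :: "real \<Rightarrow> real" and a b :: real and \<eta> \<theta> :: "nat \<Rightarrow> real"
  assumes ab: "a < b"
    and reg_f: "regulated f a b" and reg_g: "regulated g a b"
    and no_common: "\<forall>t\<in>{a..b}. continuous (at t within {a..b}) f \<or> continuous (at t within {a..b}) g"
    and eta_nonneg: "\<forall>k. \<eta> k \<ge> 0" and eta_mono: "antimono \<eta>" and eta_lim: "\<eta> \<longlonglongrightarrow> 0"
    and theta_nonneg: "\<forall>k. \<theta> k \<ge> 0" and theta_mono: "antimono \<theta>" and theta_lim: "\<theta> \<longlonglongrightarrow> 0"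
    and S_fin: "(\<Sum>k. ereal (2 ^ k * (if k = 0 then (SUP t\<in>{a..b}. \<bar>f t - f a\<bar>) else \<eta> (k - 1)))
                        * truncated_variation g a b (\<theta> k))
              + (\<Sum>k. ereal (2 ^ k * \<theta> k) * truncated_variation f a b (\<eta> k)) < \<infinity>"
  shows "\<exists>I. RS_has_integral f g a b I \<and>
           ereal \<bar>I - f a * (g b - g a)\<bar> \<le>
             (\<Sum>k. ereal (2 ^ k * (if k = 0 then (SUP t\<in>{a..b}. \<bar>f t - f a\<bar>) else \<eta> (k - 1)))
                        * truncated_variation g a b (\<theta> k))
              + (\<Sum>k. ereal (2 ^ k * \<theta> k) * truncated_variation f a b (\<eta> k))"
proof -
  define M where "M = (SUP t\<in>{a..b}. \<bar>f t - f a\<bar>)"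
  have "(\<lambda>k. if k = 0 then M else \<eta> (k - 1)) = case_nat M \<eta>" by (rule ext) (simp split: nat.split)
  then have S: "(\<Sum>k. ereal (2 ^ k * (if k = 0 then M else \<eta> (k - 1))) * truncated_variation g a b (\<theta> k))
      + (\<Sum>k. ereal (2 ^ k * \<theta> k) * truncated_variation f a b (\<eta> k)) =
      truncated_variation_series f g M \<eta> \<theta> a b"
    unfolding truncated_variation_series_def by metis
  have M: "\<forall>t\<in>{a..b}. \<bar>f t - f a\<bar> \<le> M"
    unfolding M_def using regulated_oscillation_le_SUP[OF reg_f] ab by simp
  have \<eta>: "decreasing_to_zero \<eta>" and \<theta>: "decreasing_to_zero \<theta>"
    using eta_nonneg eta_mono eta_lim theta_nonneg theta_mono theta_lim by (simp_all add: decreasing_to_zero_def)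
  have "0 \<le> M" using M ab by force
  from S_fin obtain S' where S': "truncated_variation_series f g M \<eta> \<theta> a b = ereal S'"
    using truncated_variation_series_nonneg[OF \<open>0 \<le> M\<close> \<eta> \<theta>, where f = f and g = g and c = a and d = b]
    unfolding M_def[symmetric] S
    by (cases "truncated_variation_series f g M \<eta> \<theta> a b") auto
  have bound: "\<bar>RS_sum f g l x \<nu> - f a * (g b - g a)\<bar> \<le> S'" if "tagged_partition a b l x \<nu>" for l x \<nu>
    using RS_sum_deviation_le_series[where g = g, OF that M \<eta> \<theta>] S' by simp
  have small: "\<exists>\<delta>>0. \<forall>l x \<nu>. fine_partition \<delta> a b l x \<nu> \<longrightarrow>
      (\<exists>s. local_error_bound f g l x s \<and> (\<Sum>i<l. s i) \<le> \<epsilon>)" if "0 < \<epsilon>" for \<epsilon>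
    using local_errors_small_if_series_finite[OF reg_f reg_g _ no_common M \<eta> \<theta> _ that] ab S' by simp
  obtain I where I: "RS_has_integral f g a b I"
    using RS_has_integral_if_cauchy[OF ab RS_sums_cauchy[OF small]] by blast
  with RS_has_integral_bound[OF ab I bound] show ?thesis unfolding M_def[symmetric] S S' by auto
qed

end
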